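(* Let $L$ be a restricted Lie superalgebra over $\mathbb{K}$ and $M$ a restricted $L$-module. For every linear map $\psi:L\to M$, one has $d^1_*\psi\in C^2_*(L;M)$ and $d^2_*(d^1_*\psi)=0$; that is, $d^2_{\mathrm{CE}}(d^1_{\mathrm{CE}}\psi)=0$ and $\operatorname{ind}^2\bigl(d^1_{\mathrm{CE}}\psi,\operatorname{ind}^1(\psi)\bigr)=0$. Hence $H^2_*(L;M):=\ker d^2_*/\operatorname{im} d^1_*$ is well defined.
   Context: $\mathbb{K}$ is a field of characteristic $p>2$; Lie superalgebras satisfy $[x,[x,x]]=0$ for odd $x$. A restricted Lie superalgebra has a map $x\mapsto x^{[p]}$ on $L_{\bar0}$ making $L_{\bar0}$ a restricted Lie algebra and with $\mathrm{ad}_{x^{[p]}}(y)=(\mathrm{ad}_x)^p(y)$ for $x\in L_{\bar0},y\in L$. A restricted $L$-module $M$ is a $\mathbb{Z}_2$-graded module with $x^p\cdot m=x^{[p]}\cdot m$ for $x\in L_{\bar0}$ ($x^p$ = acting $p$ times). For homogeneous $\psi\in C^1_{\mathrm{CE}}(L;M)=\mathrm{Hom}_{\mathbb{K}}(L,M)$: $d^1_{\mathrm{CE}}\psi(u,v)=\psi([u,v])-(-1)^{|u||\psi|}u\cdot\psi(v)+(-1)^{|v|(|\psi|+|u|)}v\cdot\psi(u)$, and $\operatorname{ind}^1(\psi):L_{\bar0}\to M$, $\operatorname{ind}^1(\psi)(x)=\psi(x^{[p]})-x^{p-1}\psi(x)$; $d^1_*\psi:=(d^1_{\mathrm{CE}}\psi,\operatorname{ind}^1\psi)$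 (extended additively to non-homogeneous $\psi$). $d^2_{\mathrm{CE}}$ is given by $d^2_{\mathrm{CE}}\varphi(u,v,w)=\varphi([u,v],w)-(-1)^{|v||w|}\varphi([u,w],v)-\varphi(u,[v,w])-(-1)^{|u||\varphi|}u\cdot\varphi(v,w)+(-1)^{|v|(|\varphi|+|u|)}v\cdot\varphi(u,w)-(-1)^{|w|(|\varphi|+|u|+|v|)}w\cdot\varphi(u,v)$. $C^2_*(L;M)$ is the set of pairs $(\varphi,\omega)$, $\varphi$ a super-alternating bilinear map $L\times L\to M$, $\omega:L_{\bar0}\to M$ $\varphi$-compatible, meaning $\omega(\lambda x)=\lambda^p\omega(x)$ and $\omega(x+y)=\omega(x)+\omega(y)+\sum\frac1{\sharp(x)}\varphi([x_1,\dots,x_{p-1}],x_p)+\sum\frac1{\sharp(x)}\sum_{k=1}^{p-2}(-1)^kx_p\cdots x_{p-k+1}\varphi([x_1,\dots,x_{p-k-1}],x_{p-k})$ (sums over $x_i\in\{x,y\}$, $x_1=x,x_2=y$; $\sharp(x)=\#\{k:x_k=x\}$; $[x_1,\dots,x_k]=[[\cdots[x_1,x_2],\dots],x_k]$). For $\varphi$ homogeneous and $\omega$ with values in $M_{|\varphi|}$, $\operatorname{ind}^2(\varphi,\omega)(x,y)=\varphi(x,y^{[p]})-\sum_{i+j=p-1}(-1)^iy^i\varphi([x,y,\dots,y\ (j\text{ times})],y)+(-1)^{|\varphi||x|}x\cdot\omega(y)$ for $x\in L$, $y\in L_{\bar0}$, extended additively via the decomposition $(\varphi,\omega)=(\varphi_{\bar0},\omega_{\bar0})+(\varphi_{\bar1},\omega_{\bar1})$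 ($\omega_{\bar j}$ = $M_{\bar j}$-component). $d^2_*(\varphi,\omega)=(d^2_{\mathrm{CE}}\varphi,\operatorname{ind}^2(\varphi,\omega))$. *)

theory Defs
  imports Complex_Main "HOL-Computational_Algebra.Primes"
begin

text \<open>A Z2-grading is given by a function G :: bool => 'a set, G False = even part,
  G True = odd part. Parities are booleans; addition of parities is (\<noteq>),
  product of parities is (\<and>).\<close>

definition sg :: "bool \<Rightarrow> 'm::ab_group_add \<Rightarrow> 'm" where
  "sg b m = (if b then - m else m)"

definition graded_vs :: "('k::field \<Rightarrow> 'a::ab_group_add \<Rightarrow> 'a) \<Rightarrow> (bool \<Rightarrow> 'a set) \<Rightarrow> bool" where
  "graded_vs s G \<longleftrightarrow> Vector_Spaces.vector_space s \<and>
     (\<forall>b. 0 \<in> G b \<and> (\<forall>x\<in>G b. \<forall>y\<in>G b. x + y \<in> G b) \<and> (\<forall>c. \<forall>x\<in>G b. s c x \<in> G b)) \<and>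
     (\<forall>x. \<exists>a\<in>G False. \<exists>b\<in>G True. x = a + b) \<and> G False \<inter> G True = {0}"

definition gproj :: "(bool \<Rightarrow> 'a::ab_group_add set) \<Rightarrow> bool \<Rightarrow> 'a \<Rightarrow> 'a" where
  "gproj G b x = (THE a. a \<in> G b \<and> x - a \<in> G (\<not> b))"

text \<open>lnb br xs (k-1) = [x_1, ..., x_k] = [[...[x_1,x_2],...],x_k].\<close>
primrec lnb :: "('l \<Rightarrow> 'l \<Rightarrow> 'l) \<Rightarrow> (nat \<Rightarrow> 'l) \<Rightarrow> nat \<Rightarrow> 'l" where
  "lnb br xs 0 = xs 1"
| "lnb br xs (Suc n) = br (lnb br xs n) (xs (Suc (Suc n)))"

text \<open>The sequence x_1 = x, x_2 = y, x_i = x for i in S, x_i = y otherwise (S \<subseteq> {3..p}).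
  Then #(x) = card S + 1.\<close>
definition pseq :: "'l \<Rightarrow> 'l \<Rightarrow> nat set \<Rightarrow> nat \<Rightarrow> 'l" where
  "pseq x y S i = (if i = 1 then x else if i = 2 then y else if i \<in> S then x else y)"

text \<open>acts act xs n k m = x_n (x_{n-1} (... (x_{n-k+1} m))).\<close>
primrec acts :: "('l \<Rightarrow> 'm \<Rightarrow> 'm) \<Rightarrow> (nat \<Rightarrow> 'l) \<Rightarrow> nat \<Rightarrow> nat \<Rightarrow> 'm \<Rightarrow> 'm" where
  "acts act xs n 0 m = m"
| "acts act xs n (Suc k) m = acts act xs n k (act (xs (n - k)) m)"

definition lie_superalgebra ::
  "('k::field \<Rightarrow> 'l::ab_group_add \<Rightarrow> 'l) \<Rightarrow> (bool \<Rightarrow> 'l set) \<Rightarrow> ('l \<Rightarrow> 'l \<Rightarrow> 'l) \<Rightarrow> bool" where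
  "lie_superalgebra sL G br \<longleftrightarrow> graded_vs sL G \<and>
     (\<forall>x y z. br (x + y) z = br x z + br y z \<and> br z (x + y) = br z x + br z y) \<and>
     (\<forall>c x y. br (sL c x) y = sL c (br x y) \<and> br x (sL c y) = sL c (br x y)) \<and>
     (\<forall>a b. \<forall>x\<in>G a. \<forall>y\<in>G b. br x y \<in> G (a \<noteq> b)) \<and>
     (\<forall>a b. \<forall>x\<in>G a. \<forall>y\<in>G b. br x y = - sg (a \<and> b) (br y x)) \<and>
     (\<forall>a b c. \<forall>x\<in>G a. \<forall>y\<in>G b. \<forall>z\<in>G c.
        br x (br y z) = br (br x y) z + sg (a \<and> b) (br y (br x z))) \<and>
     (\<forall>x\<in>G True. br x (br x x) = 0)"

definition restricted_lie_superalgebra ::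
  "nat \<Rightarrow> ('k::field \<Rightarrow> 'l::ab_group_add \<Rightarrow> 'l) \<Rightarrow> (bool \<Rightarrow> 'l set) \<Rightarrow> ('l \<Rightarrow> 'l \<Rightarrow> 'l)
     \<Rightarrow> ('l \<Rightarrow> 'l) \<Rightarrow> bool" where
  "restricted_lie_superalgebra p sL G br pp \<longleftrightarrow> lie_superalgebra sL G br \<and>
     (\<forall>x\<in>G False. pp x \<in> G False) \<and>
     (\<forall>c. \<forall>x\<in>G False. pp (sL c x) = sL (c ^ p) (pp x)) \<and>
     (\<forall>x\<in>G False. \<forall>y\<in>G False. pp (x + y) = pp x + pp y +
        (\<Sum>S\<in>Pow {3..p}. sL (inverse (of_nat (card S + 1))) (lnb br (pseq x y S) (p - 1)))) \<and>
     (\<forall>x\<in>G False. \<forall>y. br (pp x) y = ((\<lambda>z. br x z) ^^ p) y)"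

definition restricted_module ::
  "nat \<Rightarrow> ('k::field \<Rightarrow> 'l::ab_group_add \<Rightarrow> 'l) \<Rightarrow> (bool \<Rightarrow> 'l set) \<Rightarrow> ('l \<Rightarrow> 'l \<Rightarrow> 'l) \<Rightarrow> ('l \<Rightarrow> 'l)
     \<Rightarrow> ('k \<Rightarrow> 'm::ab_group_add \<Rightarrow> 'm) \<Rightarrow> (bool \<Rightarrow> 'm set) \<Rightarrow> ('l \<Rightarrow> 'm \<Rightarrow> 'm) \<Rightarrow> bool" where
  "restricted_module p sL G br pp sM GM act \<longleftrightarrow> graded_vs sM GM \<and>
     (\<forall>x y m. act (x + y) m = act x m + act y m) \<and>
     (\<forall>x m n. act x (m + n) = act x m + act x n) \<and>
     (\<forall>c x m. act (sL c x) m = sM c (act x m) \<and> act x (sM c m) = sM c (act x m)) \<and>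
     (\<forall>a b. \<forall>x\<in>G a. \<forall>m\<in>GM b. act x m \<in> GM (a \<noteq> b)) \<and>
     (\<forall>a b. \<forall>x\<in>G a. \<forall>y\<in>G b. \<forall>m.
        act (br x y) m = act x (act y m) - sg (a \<and> b) (act y (act x m))) \<and>
     (\<forall>x\<in>G False. \<forall>m. (act x ^^ p) m = act (pp x) m)"

text \<open>Component of parity j of a linear map psi : L -> M (maps L_i to M_(i+j)).\<close>
definition cpart1 :: "(bool \<Rightarrow> 'l::ab_group_add set) \<Rightarrow> (bool \<Rightarrow> 'm::ab_group_add set) \<Rightarrow> bool
     \<Rightarrow> ('l \<Rightarrow> 'm) \<Rightarrow> 'l \<Rightarrow> 'm" where
  "cpart1 G GM j psi x = (\<Sum>i\<in>UNIV. gproj GM (i \<noteq> j) (psi (gproj G i x)))"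

definition cpart2 :: "(bool \<Rightarrow> 'l::ab_group_add set) \<Rightarrow> (bool \<Rightarrow> 'm::ab_group_add set) \<Rightarrow> bool
     \<Rightarrow> ('l \<Rightarrow> 'l \<Rightarrow> 'm) \<Rightarrow> 'l \<Rightarrow> 'l \<Rightarrow> 'm" where
  "cpart2 G GM j phi u v =
     (\<Sum>a\<in>UNIV. \<Sum>b\<in>UNIV. gproj GM ((a \<noteq> b) \<noteq> j) (phi (gproj G a u) (gproj G b v)))"

text \<open>d^1_CE for psi of parity j, u of parity a, v of parity b.\<close>
definition dCE1_h :: "('l \<Rightarrow> 'l \<Rightarrow> 'l) \<Rightarrow> ('l \<Rightarrow> 'm::ab_group_add \<Rightarrow> 'm) \<Rightarrow> bool \<Rightarrow> bool \<Rightarrow> bool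
     \<Rightarrow> ('l \<Rightarrow> 'm) \<Rightarrow> 'l \<Rightarrow> 'l \<Rightarrow> 'm" where
  "dCE1_h br act j a b psi u v =
     psi (br u v) - sg (a \<and> j) (act u (psi v)) + sg (b \<and> (j \<noteq> a)) (act v (psi u))"

definition dCE1 :: "(bool \<Rightarrow> 'l::ab_group_add set) \<Rightarrow> ('l \<Rightarrow> 'l \<Rightarrow> 'l) \<Rightarrow> (bool \<Rightarrow> 'm::ab_group_add set)
     \<Rightarrow> ('l \<Rightarrow> 'm \<Rightarrow> 'm) \<Rightarrow> ('l \<Rightarrow> 'm) \<Rightarrow> 'l \<Rightarrow> 'l \<Rightarrow> 'm" where
  "dCE1 G br GM act psi u v =
     (\<Sum>j\<in>UNIV. \<Sum>a\<in>UNIV. \<Sum>b\<in>UNIV.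
        dCE1_h br act j a b (cpart1 G GM j psi) (gproj G a u) (gproj G b v))"

definition ind1 :: "nat \<Rightarrow> ('l \<Rightarrow> 'l) \<Rightarrow> ('l \<Rightarrow> 'm::ab_group_add \<Rightarrow> 'm) \<Rightarrow> ('l \<Rightarrow> 'm) \<Rightarrow> 'l \<Rightarrow> 'm" where
  "ind1 p pp act psi x = psi (pp x) - (act x ^^ (p - 1)) (psi x)"

text \<open>d^2_CE for phi of parity j, arguments of parities a, b, c.\<close>
definition dCE2_h :: "('l \<Rightarrow> 'l \<Rightarrow> 'l) \<Rightarrow> ('l \<Rightarrow> 'm::ab_group_add \<Rightarrow> 'm) \<Rightarrow> bool \<Rightarrow> bool \<Rightarrow> bool \<Rightarrow> bool
     \<Rightarrow> ('l \<Rightarrow> 'l \<Rightarrow> 'm) \<Rightarrow> 'l \<Rightarrow> 'l \<Rightarrow> 'l \<Rightarrow> 'm" where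
  "dCE2_h br act j a b c phi u v w =
     phi (br u v) w - sg (b \<and> c) (phi (br u w) v) - phi u (br v w)
     - sg (a \<and> j) (act u (phi v w))
     + sg (b \<and> (j \<noteq> a)) (act v (phi u w))
     - sg (c \<and> ((j \<noteq> a) \<noteq> b)) (act w (phi u v))"

definition dCE2 :: "(bool \<Rightarrow> 'l::ab_group_add set) \<Rightarrow> ('l \<Rightarrow> 'l \<Rightarrow> 'l) \<Rightarrow> (bool \<Rightarrow> 'm::ab_group_add set)
     \<Rightarrow> ('l \<Rightarrow> 'm \<Rightarrow> 'm) \<Rightarrow> ('l \<Rightarrow> 'l \<Rightarrow> 'm) \<Rightarrow> 'l \<Rightarrow> 'l \<Rightarrow> 'l \<Rightarrow> 'm" where
  "dCE2 G br GM act phi u v w =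
     (\<Sum>j\<in>UNIV. \<Sum>a\<in>UNIV. \<Sum>b\<in>UNIV. \<Sum>c\<in>UNIV.
        dCE2_h br act j a b c (cpart2 G GM j phi) (gproj G a u) (gproj G b v) (gproj G c w))"

definition super_alt_bilinear ::
  "('k::field \<Rightarrow> 'l::ab_group_add \<Rightarrow> 'l) \<Rightarrow> (bool \<Rightarrow> 'l set) \<Rightarrow> ('k \<Rightarrow> 'm::ab_group_add \<Rightarrow> 'm)
     \<Rightarrow> ('l \<Rightarrow> 'l \<Rightarrow> 'm) \<Rightarrow> bool" where
  "super_alt_bilinear sL G sM phi \<longleftrightarrow>
     (\<forall>x y z. phi (x + y) z = phi x z + phi y z \<and> phi z (x + y) = phi z x + phi z y) \<and>
     (\<forall>c x y. phi (sL c x) y = sM c (phi x y) \<and> phi x (sL c y) = sM c (phi x y)) \<and>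
     (\<forall>a b. \<forall>x\<in>G a. \<forall>y\<in>G b. phi x y = - sg (a \<and> b) (phi y x))"

definition compatible ::
  "nat \<Rightarrow> ('k::field \<Rightarrow> 'l::ab_group_add \<Rightarrow> 'l) \<Rightarrow> (bool \<Rightarrow> 'l set) \<Rightarrow> ('l \<Rightarrow> 'l \<Rightarrow> 'l)
     \<Rightarrow> ('k \<Rightarrow> 'm::ab_group_add \<Rightarrow> 'm) \<Rightarrow> ('l \<Rightarrow> 'm \<Rightarrow> 'm) \<Rightarrow> ('l \<Rightarrow> 'l \<Rightarrow> 'm) \<Rightarrow> ('l \<Rightarrow> 'm) \<Rightarrow> bool" where
  "compatible p sL G br sM act phi omega \<longleftrightarrow>
     (\<forall>c. \<forall>x\<in>G False. omega (sL c x) = sM (c ^ p) (omega x)) \<and>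
     (\<forall>x\<in>G False. \<forall>y\<in>G False. omega (x + y) = omega x + omega y
        + (\<Sum>S\<in>Pow {3..p}. sM (inverse (of_nat (card S + 1)))
             (phi (lnb br (pseq x y S) (p - 2)) (pseq x y S p)))
        + (\<Sum>S\<in>Pow {3..p}. sM (inverse (of_nat (card S + 1)))
             (\<Sum>k\<in>{1..p - 2}. sM ((- 1) ^ k)
                (acts act (pseq x y S) p k
                   (phi (lnb br (pseq x y S) (p - k - 2)) (pseq x y S (p - k)))))))"

definition C2star ::
  "nat \<Rightarrow> ('k::field \<Rightarrow> 'l::ab_group_add \<Rightarrow> 'l) \<Rightarrow> (bool \<Rightarrow> 'l set) \<Rightarrow> ('l \<Rightarrow> 'l \<Rightarrow> 'l)
     \<Rightarrow> ('k \<Rightarrow> 'm::ab_group_add \<Rightarrow> 'm) \<Rightarrow> ('l \<Rightarrow> 'm \<Rightarrow> 'm) \<Rightarrow> ('l \<Rightarrow> 'l \<Rightarrow> 'm) \<Rightarrow> ('l \<Rightarrow> 'm) \<Rightarrow> bool" where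
  "C2star p sL G br sM act phi omega \<longleftrightarrow>
     super_alt_bilinear sL G sM phi \<and> compatible p sL G br sM act phi omega"

text \<open>ind^2 for phi of parity j (omega with values in M_j), x of parity a, y in L_0.\<close>
definition ind2_h :: "nat \<Rightarrow> ('l \<Rightarrow> 'l \<Rightarrow> 'l) \<Rightarrow> ('l \<Rightarrow> 'l) \<Rightarrow> ('k::field \<Rightarrow> 'm::ab_group_add \<Rightarrow> 'm)
     \<Rightarrow> ('l \<Rightarrow> 'm \<Rightarrow> 'm) \<Rightarrow> bool \<Rightarrow> bool \<Rightarrow> ('l \<Rightarrow> 'l \<Rightarrow> 'm) \<Rightarrow> ('l \<Rightarrow> 'm) \<Rightarrow> 'l \<Rightarrow> 'l \<Rightarrow> 'm" where
  "ind2_h p br pp sM act j a phi omega x y =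
     phi x (pp y)
     - (\<Sum>i\<in>{..p - 1}. sM ((- 1) ^ i)
          ((act y ^^ i) (phi (((\<lambda>z. br z y) ^^ (p - 1 - i)) x) y)))
     + sg (j \<and> a) (act x (omega y))"

definition ind2 :: "nat \<Rightarrow> (bool \<Rightarrow> 'l::ab_group_add set) \<Rightarrow> ('l \<Rightarrow> 'l \<Rightarrow> 'l) \<Rightarrow> ('l \<Rightarrow> 'l)
     \<Rightarrow> ('k::field \<Rightarrow> 'm::ab_group_add \<Rightarrow> 'm) \<Rightarrow> (bool \<Rightarrow> 'm set) \<Rightarrow> ('l \<Rightarrow> 'm \<Rightarrow> 'm)
     \<Rightarrow> ('l \<Rightarrow> 'l \<Rightarrow> 'm) \<Rightarrow> ('l \<Rightarrow> 'm) \<Rightarrow> 'l \<Rightarrow> 'l \<Rightarrow> 'm" where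
  "ind2 p G br pp sM GM act phi omega x y =
     (\<Sum>j\<in>UNIV. \<Sum>a\<in>UNIV.
        ind2_h p br pp sM act j a (cpart2 G GM j phi) (\<lambda>z. gproj GM j (omega z)) (gproj G a x) y)"

end

theory Submission
  imports Defs "HOL-Computational_Algebra.Formal_Power_Series"
begin

text \<open>
  All identities are checked on homogeneous arguments and on parity components.
  That \<open>d\<^sup>2 (d\<^sup>1 \<psi>) = 0\<close> is the usual consequence of the super Jacobi identity and the
  module axioms. The statements about the \<open>p\<close>-map are reduced to identities in an associative
  ring of characteristic \<open>p\<close>: an even \<open>x\<close> together with a vector \<open>u\<close> acts on \<open>M \<times> \<bbbk>\<close> by
  \<open>(m, c) \<mapsto> (x m + c u, 0)\<close>; the commutator of two such maps is again of this form with
  linear part the bracket, and the \<open>p\<close>-th power of the map of \<open>(x, \<psi> x)\<close> has translation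
  part \<open>x\<^sup>p\<^sup>-\<^sup>1 \<psi> x\<close>. Jacobson's formula for \<open>(A + B)\<^sup>p\<close> in this ring therefore computes
  \<open>ind\<^sup>1 \<psi> (x + y)\<close>, and the correction terms of compatibility telescope along the iterated
  brackets. Finally \<open>ind\<^sup>2\<close> vanishes because \<open>\<Sum>\<^sub>i (-1)\<^sup>i y\<^sup>i (ad\<^sub>r y)\<^sup>p\<^sup>-\<^sup>1\<^sup>-\<^sup>i x = x y\<^sup>p\<^sup>-\<^sup>1\<close>
  in characteristic \<open>p\<close> (with \<open>ad\<^sub>r y = [-, y]\<close>) and \<open>(ad y)\<^sup>p = ad (y\<^sup>[\<^sup>p\<^sup>])\<close>.
\<close>

section \<open>Commutators and Jacobson's formula in characteristic \<open>p\<close>\<close>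

definition commutator :: "'a::ring \<Rightarrow> 'a \<Rightarrow> 'a" where
  "commutator u v = u * v - v * u"

lemma commutator_swap: "commutator u v = - commutator v u"
  by (simp add: commutator_def)

lemma commutator_sum_right: "commutator z (\<Sum>i\<in>A. f i) = (\<Sum>i\<in>A. commutator z (f i))"
  by (simp add: commutator_def sum_distrib_left sum_distrib_right sum_subtractf)

lemma commutator_sum_left: "commutator (\<Sum>i\<in>A. f i) z = (\<Sum>i\<in>A. commutator (f i) z)"
  by (simp add: commutator_def sum_distrib_left sum_distrib_right sum_subtractf)

lemma commutator_of_int_right: "commutator z (of_int c * w) = of_int c * commutator z (w::'a::ring_1)"
  by (simp add: commutator_def right_diff_distrib mult.assoc mult_of_int_commute)

lemma commutator_of_int_left: "commutator (of_int c * w) z = of_int c * commutator w (z::'a::ring_1)"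
  by (simp add: commutator_def right_diff_distrib mult.assoc)
    (metis mult.assoc mult_of_int_commute)

definition signed_binomial :: "nat \<Rightarrow> nat \<Rightarrow> int" where
  "signed_binomial n k = (-1) ^ k * int (n choose k)"

lemma signed_binomial_Suc_Suc:
  "signed_binomial (Suc n) (Suc k) = signed_binomial n (Suc k) - signed_binomial n k"
  by (simp add: signed_binomial_def algebra_simps)

lemma signed_binomial_prime_minus_one_cong:
  assumes "prime p" "k \<le> p - 1"
  shows "int p dvd signed_binomial (p - 1) k - 1"
  using assms(2)
proof (induction k)
  case 0
  then show ?case by (simp add: signed_binomial_def)
next
  case (Suc k)
  have "p \<ge> 2" using assms(1) prime_ge_2_nat by blast
  have "p dvd (p choose Suc k)"
    by (rule dvd_choose_prime) (use Suc.prems \<open>p \<ge> 2\<close> assms(1) in auto)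
  then have "int p dvd signed_binomial p (Suc k)"
    by (simp add: signed_binomial_def int_dvd_int_iff)
  moreover have "signed_binomial (p - 1) (Suc k) - 1
      = signed_binomial p (Suc k) + (signed_binomial (p - 1) k - 1)"
    using \<open>p \<ge> 2\<close> signed_binomial_Suc_Suc[of "p - 1" k] by (simp add: Suc_diff_1)
  moreover have "int p dvd signed_binomial (p - 1) k - 1" using Suc by simp
  ultimately show ?case by (metis dvd_add)
qed

lemma of_int_signed_binomial_prime_minus_one:
  assumes "prime p" "of_nat p = (0::'a::ring_1)" "k \<le> p - 1"
  shows "of_int (signed_binomial (p - 1) k) = (1::'a)"
proof -
  obtain t where "signed_binomial (p - 1) k = int p * t + 1"
    using signed_binomial_prime_minus_one_cong[OF assms(1,3)]
    by (metis diff_add_cancel dvdE)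
  then show ?thesis using assms(2) by simp
qed

lemma commutator_power_expansion:
  fixes z w :: "'a::ring_1"
  shows "(commutator z ^^ n) w = (\<Sum>k\<le>n. of_int (signed_binomial n k) * (z ^ (n - k) * w * z ^ k))"
proof (induction n)
  case 0
  then show ?case by (simp add: signed_binomial_def)
next
  case (Suc n)
  define f where "f k = z ^ (Suc n - k) * w * z ^ k" for k
  have left: "z * (\<Sum>k\<le>n. of_int (signed_binomial n k) * (z ^ (n - k) * w * z ^ k))
      = (\<Sum>k\<le>Suc n. of_int (signed_binomial n k) * f k)"
  proof -
    have "z * (of_int c * y) = of_int c * (z * y)" for c y
      by (metis mult.assoc mult_of_int_commute)
    then have "z * (\<Sum>k\<le>n. of_int (signed_binomial n k) * (z ^ (n - k) * w * z ^ k))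
        = (\<Sum>k\<le>n. of_int (signed_binomial n k) * f k)"
      unfolding sum_distrib_left f_def by (intro sum.cong refl) (simp add: Suc_diff_le mult.assoc)
    then show ?thesis by (simp add: signed_binomial_def binomial_eq_0)
  qed
  have right: "(\<Sum>k\<le>n. of_int (signed_binomial n k) * (z ^ (n - k) * w * z ^ k)) * z
      = (\<Sum>k\<le>Suc n. of_int (if k = 0 then 0 else signed_binomial n (k - 1)) * f k)"
    unfolding sum_distrib_right f_def sum.atMost_Suc_shift
    by (simp add: mult.assoc power_commutes)
  have "(commutator z ^^ Suc n) w = (\<Sum>k\<le>Suc n. of_int (signed_binomial n k
      - (if k = 0 then 0 else signed_binomial n (k - 1))) * f k)"
    by (simp add: Suc.IH commutator_def left right sum_subtractf left_diff_distrib)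
  also have "\<dots> = (\<Sum>k\<le>Suc n. of_int (signed_binomial (Suc n) k) * f k)"
    by (intro sum.cong refl, rename_tac k, case_tac k)
      (simp add: signed_binomial_def, simp add: signed_binomial_Suc_Suc)
  finally show ?case by (simp add: f_def)
qed

lemma commutator_power_prime_minus_one:
  fixes z w :: "'a::ring_1"
  assumes "prime p" "of_nat p = (0::'a)"
  shows "(commutator z ^^ (p - 1)) w = (\<Sum>k<p. z ^ k * w * z ^ (p - 1 - k))"
proof -
  have "p \<ge> 2" using assms(1) prime_ge_2_nat by blast
  have "(commutator z ^^ (p - 1)) w = (\<Sum>k\<le>p - 1. z ^ (p - 1 - k) * w * z ^ k)"
    unfolding commutator_power_expansion
    using of_int_signed_binomial_prime_minus_one[OF assms] by (intro sum.cong) auto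
  also have "\<dots> = (\<Sum>k<p. z ^ (p - 1 - k) * w * z ^ k)"
    using \<open>p \<ge> 2\<close> by (intro sum.cong) auto
  also have "\<dots> = (\<Sum>k<p. z ^ k * w * z ^ (p - 1 - k))"
    by (subst sum.nat_diff_reindex[symmetric])
      (intro sum.cong refl, simp add: Suc_diff_Suc diff_diff_cancel less_imp_le_nat)
  finally show ?thesis .
qed

text \<open>The coefficient of \<open>X\<^sup>i\<close> in \<open>(X a + b)\<^sup>p\<close> is the part of \<open>(a + b)\<^sup>p\<close> of degree \<open>i\<close> in \<open>a\<close>.
  In characteristic \<open>p\<close> the derivative of \<open>(X a + b)\<^sup>p\<close> is \<open>(ad (X a + b))\<^sup>p\<^sup>-\<^sup>1 a\<close>, which
  expresses \<open>i\<close> times that part through iterated commutators.\<close>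

definition jacobson_fps :: "'a::ring_1 \<Rightarrow> 'a \<Rightarrow> 'a fps" where
  "jacobson_fps a b = fps_X * fps_const a + fps_const b"

lemma fps_nth_jacobson_fps_power_Suc:
  "fps_nth (jacobson_fps a b ^ Suc n) i
     = (if i = 0 then 0 else fps_nth (jacobson_fps a b ^ n) (i - 1) * a)
       + fps_nth (jacobson_fps a b ^ n) i * b"
proof -
  have "jacobson_fps a b ^ Suc n
      = jacobson_fps a b ^ n * fps_X * fps_const a + jacobson_fps a b ^ n * fps_const b"
    by (simp only: power_Suc2 jacobson_fps_def distrib_left mult.assoc)
  then show ?thesis by (simp add: fps_X_mult_right_nth del: power_Suc)
qed

lemma fps_nth_jacobson_fps_power_above:
  "n < i \<Longrightarrow> fps_nth (jacobson_fps a b ^ n) i = 0"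
proof (induction n arbitrary: i)
  case 0
  then show ?case by (simp add: jacobson_fps_def)
next
  case (Suc n)
  then show ?case by (simp add: fps_nth_jacobson_fps_power_Suc del: power_Suc)
qed

lemma fps_nth_jacobson_fps_power_0: "fps_nth (jacobson_fps a b ^ n) 0 = b ^ n"
proof (induction n)
  case 0
  then show ?case by (simp add: jacobson_fps_def)
next
  case (Suc n)
  then show ?case by (simp add: fps_nth_jacobson_fps_power_Suc power_Suc2 del: power_Suc)
      (simp add: jacobson_fps_def)
qed

lemma fps_nth_jacobson_fps_power_top: "fps_nth (jacobson_fps a b ^ n) n = a ^ n"
proof (induction n)
  case 0
  then show ?case by (simp add: jacobson_fps_def)
next
  case (Suc n)
  then show ?case
    by (subst fps_nth_jacobson_fps_power_Suc)
      (simp add: fps_nth_jacobson_fps_power_above power_Suc2 del: power_Suc)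
qed

lemma sum_fps_nth_jacobson_fps_power:
  "(\<Sum>i\<le>n. fps_nth (jacobson_fps a b ^ n) i) = (a + b) ^ n"
proof (induction n)
  case 0
  then show ?case by (simp add: jacobson_fps_def)
next
  case (Suc n)
  let ?c = "fps_nth (jacobson_fps a b ^ n)"
  have "(\<Sum>i\<le>Suc n. fps_nth (jacobson_fps a b ^ Suc n) i)
      = (\<Sum>i\<le>Suc n. if i = 0 then 0 else ?c (i - 1) * a) + (\<Sum>i\<le>Suc n. ?c i * b)"
    by (simp add: fps_nth_jacobson_fps_power_Suc sum.distrib del: power_Suc)
  also have "(\<Sum>i\<le>Suc n. if i = 0 then 0 else ?c (i - 1) * a) = (\<Sum>i\<le>n. ?c i) * a"
    by (subst sum.atMost_Suc_shift) (simp add: sum_distrib_right)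
  also have "(\<Sum>i\<le>Suc n. ?c i * b) = (\<Sum>i\<le>n. ?c i) * b"
    by (simp add: fps_nth_jacobson_fps_power_above sum_distrib_right)
  finally show ?case using Suc by (simp add: power_Suc2 distrib_left del: power_Suc)
qed

lemma fps_deriv_jacobson_fps_power:
  "fps_deriv (jacobson_fps a b ^ n)
     = (\<Sum>k<n. jacobson_fps a b ^ k * fps_const a * jacobson_fps a b ^ (n - 1 - k))"
proof (induction n)
  case 0
  then show ?case by simp
next
  case (Suc n)
  let ?J = "jacobson_fps a b"
  have "fps_deriv (?J ^ Suc n) = ?J ^ n * fps_const a + fps_deriv (?J ^ n) * ?J"
    by (simp add: power_Suc2 jacobson_fps_def del: power_Suc)
  also have "fps_deriv (?J ^ n) * ?J = (\<Sum>k<n. ?J ^ k * fps_const a * ?J ^ (Suc n - 1 - k))"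
    unfolding Suc sum_distrib_right
    by (intro sum.cong refl) (simp add: mult.assoc Suc_diff_Suc power_Suc2[symmetric] Suc_diff_le)
  finally show ?case by (simp add: add.commute)
qed

lemma commutator_jacobson_fps_monomial:
  fixes a b v :: "'a::ring_1"
  shows "commutator (jacobson_fps a b) (fps_X ^ c * fps_const v)
       = fps_X ^ Suc c * fps_const (commutator a v) + fps_X ^ c * fps_const (commutator b v)"
proof -
  have const_left: "fps_const u * (fps_X ^ c * fps_const v) = fps_X ^ c * fps_const (u * v)" for u
    by (metis fps_mult_fps_X_power_commute mult.assoc fps_const_mult)
  have X_right: "fps_X ^ c * fps_const v * fps_X = fps_X ^ Suc c * fps_const v"
    by (metis fps_mult_fps_X_commute mult.assoc power_Suc2)
  have "jacobson_fps a b * (fps_X ^ c * fps_const v)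
      = fps_X ^ Suc c * fps_const (a * v) + fps_X ^ c * fps_const (b * v)"
    unfolding jacobson_fps_def distrib_right
    by (simp only: mult.assoc const_left) (simp only: mult.assoc[symmetric] power_Suc)
  moreover have "(fps_X ^ c * fps_const v) * jacobson_fps a b
      = fps_X ^ Suc c * fps_const (v * a) + fps_X ^ c * fps_const (v * b)"
    unfolding jacobson_fps_def distrib_left
    by (simp only: mult.assoc[symmetric] X_right) (simp only: mult.assoc fps_const_mult)
  ultimately show ?thesis
    by (simp add: commutator_def right_diff_distrib algebra_simps flip: fps_const_sub)
qed

lemma lnb_cong: "(\<And>i. 1 \<le> i \<Longrightarrow> i \<le> Suc n \<Longrightarrow> xs i = ys i) \<Longrightarrow> lnb br xs n = lnb br ys n"
  by (induction n) auto

lemma lnb_pseq_Suc: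
  assumes "S \<subseteq> {3..Suc n}" "n \<ge> 1"
  shows "lnb br (pseq a b (insert (Suc (Suc n)) S)) (Suc n) = br (lnb br (pseq a b S) n) a"
    and "lnb br (pseq a b S) (Suc n) = br (lnb br (pseq a b S) n) b"
proof -
  have "lnb br (pseq a b (insert (Suc (Suc n)) S)) n = lnb br (pseq a b S) n"
    by (rule lnb_cong) (simp add: pseq_def)
  then show "lnb br (pseq a b (insert (Suc (Suc n)) S)) (Suc n) = br (lnb br (pseq a b S) n) a"
    using assms(2) by (simp add: pseq_def)
  have "Suc (Suc n) \<notin> S" using assms by auto
  then show "lnb br (pseq a b S) (Suc n) = br (lnb br (pseq a b S) n) b"
    by (simp add: pseq_def)
qed

lemma acts_Suc: "acts act xs N (Suc k) m = act (xs N) (acts act xs (N - 1) k m)"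
proof (induction k arbitrary: m)
  case 0
  then show ?case by simp
next
  case (Suc k)
  have "acts act xs N (Suc (Suc k)) m = act (xs N) (acts act xs (N - 1) k (act (xs (N - Suc k)) m))"
    using Suc.IH by simp
  also have "N - Suc k = N - 1 - k" by simp
  finally show ?case by simp
qed

lemma pseq_comp: "pseq (f x) (f y) S = (\<lambda>i. f (pseq x y S i))"
  by (rule ext) (simp add: pseq_def)

lemma sum_Pow_atLeastAtMost_Suc:
  assumes "m \<le> Suc n"
  shows "(\<Sum>S\<in>Pow {m..Suc n}. f S)
       = (\<Sum>S\<in>Pow {m..n}. f S) + (\<Sum>S\<in>Pow {m..n}. f (insert (Suc n) S))"
proof -
  have "Suc n \<notin> S" if "S \<in> Pow {m..n}" for S using that by auto
  then have inj: "inj_on (insert (Suc n)) (Pow {m..n})"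
    by (intro inj_onI) (metis Diff_insert_absorb)
  have "{m..Suc n} = insert (Suc n) {m..n}" using assms by auto
  moreover have "Pow {m..n} \<inter> insert (Suc n) ` Pow {m..n} = {}" by auto
  ultimately show ?thesis
    by (simp add: Pow_insert sum.union_disjoint sum.reindex[OF inj])
qed

lemma commutator_power_jacobson_fps:
  fixes a b :: "'a::ring_1"
  assumes "n \<ge> 1"
  shows "(commutator (jacobson_fps a b) ^^ n) (fps_const a)
     = (\<Sum>S\<in>Pow {3..Suc n}. fps_X ^ card S * fps_const ((-1) ^ n * lnb commutator (pseq a b S) n))"
  using assms
proof (induction n rule: dec_induct)
  case base
  have "commutator (jacobson_fps a b) (fps_X ^ 0 * fps_const a)
      = fps_const ((-1) * commutator a b)"
    unfolding commutator_jacobson_fps_monomial by (simp add: commutator_def)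
  then show ?case by (simp add: pseq_def)
next
  case (step n)
  let ?L = "\<lambda>S. lnb commutator (pseq a b S) n"
  let ?c = "\<lambda>S x. (-1) ^ Suc n * commutator (?L S) x"
  have swap: "commutator x ((-1) ^ n * y) = (-1) ^ Suc n * commutator y x" for x y :: 'a
    using commutator_of_int_right[of x "(-1) ^ n" y] commutator_swap[of x y] by simp
  have card_insert: "card (insert (Suc (Suc n)) S) = Suc (card S)" if "S \<in> Pow {3..Suc n}" for S
    using that finite_subset[of S "{3..Suc n}"] by (subst card_insert_disjoint) auto
  have "(commutator (jacobson_fps a b) ^^ Suc n) (fps_const a)
      = (\<Sum>S\<in>Pow {3..Suc n}. fps_X ^ Suc (card S) * fps_const (?c S a)
           + fps_X ^ card S * fps_const (?c S b))"
    by (simp add: step.IH commutator_sum_right commutator_jacobson_fps_monomial swap)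
  also have "\<dots> = (\<Sum>S\<in>Pow {3..Suc n}. fps_X ^ card S
                     * fps_const ((-1) ^ Suc n * lnb commutator (pseq a b S) (Suc n)))
      + (\<Sum>S\<in>Pow {3..Suc n}. fps_X ^ card (insert (Suc (Suc n)) S)
           * fps_const ((-1) ^ Suc n * lnb commutator (pseq a b (insert (Suc (Suc n)) S)) (Suc n)))"
    unfolding sum.distrib using step.hyps
    by (subst add.commute, intro arg_cong2[where f = plus] sum.cong refl)
      (simp_all add: card_insert lnb_pseq_Suc del: power_Suc lnb.simps)
  also have "\<dots> = (\<Sum>S\<in>Pow {3..Suc (Suc n)}. fps_X ^ card S
                     * fps_const ((-1) ^ Suc n * lnb commutator (pseq a b S) (Suc n)))"
    using step.hyps by (intro sum_Pow_atLeastAtMost_Suc[symmetric]) simp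
  finally show ?case .
qed

lemma power_add_jacobson_fps_coeffs:
  fixes a b :: "'a::ring_1" and p :: nat
  assumes "p \<ge> 2"
  shows "(a + b) ^ p = a ^ p + b ^ p + (\<Sum>i=1..p-1. fps_nth (jacobson_fps a b ^ p) i)"
proof -
  have "{..p} = insert 0 (insert p {1..p-1})" using assms by auto
  then show ?thesis
    using assms sum_fps_nth_jacobson_fps_power[of a b p]
    by (simp add: fps_nth_jacobson_fps_power_0 fps_nth_jacobson_fps_power_top algebra_simps)
qed

lemma of_nat_mult_jacobson_fps_coeff:
  fixes a b :: "'a::ring_1"
  assumes "prime p" "p > 2" "of_nat p = (0::'a)" "i \<ge> 1"
  shows "of_nat i * fps_nth (jacobson_fps a b ^ p) i
       = (\<Sum>S | S \<in> Pow {3..p} \<and> card S = i - 1. lnb commutator (pseq a b S) (p - 1))"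
proof -
  have "odd p" using assms(1,2) prime_odd_nat by auto
  have p0: "of_nat p = (0::'a fps)" using assms(3) by (simp flip: fps_of_nat)
  have "of_nat i * fps_nth (jacobson_fps a b ^ p) i
      = fps_nth (fps_deriv (jacobson_fps a b ^ p)) (i - 1)"
    using assms(4) by simp
  also have "fps_deriv (jacobson_fps a b ^ p)
      = (commutator (jacobson_fps a b) ^^ (p - 1)) (fps_const a)"
    unfolding fps_deriv_jacobson_fps_power
      commutator_power_prime_minus_one[OF assms(1) p0] ..
  also have "\<dots> = (\<Sum>S\<in>Pow {3..p}. fps_X ^ card S * fps_const (lnb commutator (pseq a b S) (p - 1)))"
    using commutator_power_jacobson_fps[of "p - 1" a b] assms(2) \<open>odd p\<close> by simp
  finally have "of_nat i * fps_nth (jacobson_fps a b ^ p) i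
      = (\<Sum>S\<in>Pow {3..p}. fps_nth (fps_X ^ card S * fps_const (lnb commutator (pseq a b S) (p - 1))) (i - 1))"
    by (simp add: fps_sum_nth)
  also have "\<dots> = (\<Sum>S\<in>Pow {3..p}. if card S = i - 1 then lnb commutator (pseq a b S) (p - 1) else 0)"
    by (intro sum.cong refl) (auto simp: fps_X_power_mult_nth)
  also have "\<dots> = (\<Sum>S | S \<in> Pow {3..p} \<and> card S = i - 1. lnb commutator (pseq a b S) (p - 1))"
    by (rule sum.inter_filter[symmetric]) simp
  finally show ?thesis .
qed

lemma commutator_sign_power_mult_left:
  fixes y w :: "'a::ring_1"
  shows "commutator ((-1) ^ i * (y ^ i * w)) y = (-1) ^ i * (y ^ i * commutator w y)"
  using commutator_of_int_left[of "(-1) ^ i" "y ^ i * w" y]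
  by (simp add: commutator_def right_diff_distrib mult.assoc power_commutes flip: mult.assoc)

lemma commutator_monomial_left:
  fixes x y :: "'a::ring_1"
  assumes "l \<le> n"
  shows "commutator (y ^ l * x * y ^ (n - l)) y
       = y ^ l * x * y ^ (Suc n - l) - y ^ Suc l * x * y ^ (Suc n - Suc l)"
  using assms unfolding commutator_def
  by (simp add: mult.assoc power_commutes Suc_diff_le flip: power_Suc power_Suc2)
    (simp add: mult.assoc[symmetric])

lemma alternating_commutator_sum_expansion:
  fixes x y :: "'a::ring_1"
  shows "(\<Sum>i\<le>n. (-1) ^ i * (y ^ i * ((\<lambda>w. commutator w y) ^^ (n - i)) x))
       = (\<Sum>l\<le>n. of_int (signed_binomial (Suc n) l) * (y ^ l * x * y ^ (n - l)))"
proof (induction n)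
  case 0
  then show ?case by (simp add: signed_binomial_def)
next
  case (Suc n)
  define D where "D = (\<lambda>w. commutator w y)"
  define g where "g l = y ^ l * x * y ^ (Suc n - l)" for l
  have D_sum: "D (\<Sum>i\<in>A. f i) = (\<Sum>i\<in>A. D (f i))" for f :: "nat \<Rightarrow> 'a" and A
    by (simp add: D_def commutator_sum_left)
  have D_of_int: "D (of_int c * w) = of_int c * D w" for c w
    by (simp add: D_def commutator_of_int_left)
  have D_y_power: "D ((-1) ^ i * (y ^ i * w)) = (-1) ^ i * (y ^ i * D w)" for i w
    by (simp add: D_def commutator_sign_power_mult_left)
  have D_monomial: "D (y ^ l * x * y ^ (n - l)) = g l - g (Suc l)" if "l \<le> n" for l
    using that by (simp add: D_def g_def commutator_monomial_left)
  let ?S = "\<lambda>n. \<Sum>i\<le>n. (-1) ^ i * (y ^ i * (D ^^ (n - i)) x)"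
  let ?t = "(-1) ^ Suc n * (y ^ Suc n * x)"
  let ?c = "\<lambda>l. of_int (signed_binomial (Suc n) l)"
  let ?c' = "\<lambda>l. of_int (if l = 0 then 0 else signed_binomial (Suc n) (l - 1))"
  have S_Suc: "?S (Suc n) = D (?S n) + ?t"
    by (simp add: D_sum D_y_power Suc_diff_le del: power_Suc)
  have D_S: "D (?S n) = (\<Sum>l\<le>n. ?c l * g l) - (\<Sum>l\<le>n. ?c l * g (Suc l))"
    unfolding Suc.IH[folded D_def] D_sum sum_subtractf[symmetric]
    by (intro sum.cong refl) (simp add: D_of_int D_monomial right_diff_distrib)
  have shift_top: "(\<Sum>l\<le>n. ?c l * g l) = (\<Sum>l\<le>Suc n. ?c l * g l) - ?t"
    by (simp add: signed_binomial_def g_def)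
  have shift_index: "(\<Sum>l\<le>n. ?c l * g (Suc l)) = (\<Sum>l\<le>Suc n. ?c' l * g l)"
    by (subst sum.atMost_Suc_shift) simp
  have "?S (Suc n) = (\<Sum>l\<le>Suc n. ?c l * g l) - ?t - (\<Sum>l\<le>Suc n. ?c' l * g l) + ?t"
    unfolding S_Suc D_S shift_top shift_index ..
  also have "\<dots> = (\<Sum>l\<le>Suc n. (?c l - ?c' l) * g l)"
  proof -
    have "u - t - v + t = u - v" for u v t :: 'a by (simp add: algebra_simps)
    then show ?thesis by (simp only: left_diff_distrib sum_subtractf)
  qed
  also have "\<dots> = (\<Sum>l\<le>Suc n. of_int (signed_binomial (Suc (Suc n)) l) * g l)"
    by (intro sum.cong refl, rename_tac l, case_tac l, simp_all only: of_int_diff[symmetric])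
      (simp add: signed_binomial_def, simp add: signed_binomial_Suc_Suc)
  finally show ?case by (simp add: D_def g_def)
qed

lemma alternating_commutator_sum_prime:
  fixes x y :: "'a::ring_1"
  assumes "prime p" "of_nat p = (0::'a)"
  shows "(\<Sum>i<p. (-1) ^ i * (y ^ i * ((\<lambda>w. commutator w y) ^^ (p - 1 - i)) x)) = x * y ^ (p - 1)"
proof -
  have "p \<ge> 2" using assms(1) prime_ge_2_nat by blast
  have vanish: "of_int (signed_binomial p l) = (0::'a)" if "1 \<le> l" "l \<le> p - 1" for l
  proof -
    have "p dvd (p choose l)"
      by (rule dvd_choose_prime) (use that \<open>p \<ge> 2\<close> assms(1) in auto)
    then obtain t where "p choose l = p * t" by (auto elim: dvdE)
    then show ?thesis using assms(2) by (simp add: signed_binomial_def)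
  qed
  have "(\<Sum>i<p. (-1) ^ i * (y ^ i * ((\<lambda>w. commutator w y) ^^ (p - 1 - i)) x))
      = (\<Sum>l\<le>p - 1. of_int (signed_binomial p l) * (y ^ l * x * y ^ (p - 1 - l)))"
  proof -
    have "{..<p} = {..p - 1}" using \<open>p \<ge> 2\<close> by auto
    then show ?thesis
      using alternating_commutator_sum_expansion[where n = "p - 1" and x = x and y = y] \<open>p \<ge> 2\<close>
      by (simp add: Suc_diff_1)
  qed
  also have "\<dots> = (\<Sum>l\<le>p - 1. if l = 0 then x * y ^ (p - 1) else 0)"
    by (intro sum.cong refl) (auto simp: vanish signed_binomial_def[of p 0])
  finally show ?thesis by simp
qed

section \<open>Gradings and signs\<close>

lemma sg_simps [simp]: "sg False m = m" "sg True m = - m"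
  by (simp_all add: sg_def)

lemma sg_add: "sg b (x + y) = sg b x + sg b y"
  by (cases b) simp_all

lemma sg_sum: "(\<Sum>i\<in>A. sg b (f i)) = sg b (\<Sum>i\<in>A. f i)"
  by (cases b) (simp_all add: sum_negf)

lemma sum_UNIV_bool: "(\<Sum>b\<in>UNIV. f b) = f False + f True"
  by (simp add: UNIV_bool add.commute)

context
  fixes s :: "'k::field \<Rightarrow> 'a::ab_group_add \<Rightarrow> 'a" and G :: "bool \<Rightarrow> 'a set"
  assumes graded: "graded_vs s G"
begin

lemma graded_vs_vector_space: "Vector_Spaces.vector_space s"
  using graded by (simp add: graded_vs_def)

lemma graded_vs_zero: "0 \<in> G b"
  using graded by (simp add: graded_vs_def)

lemma graded_vs_add: "x \<in> G b \<Longrightarrow> y \<in> G b \<Longrightarrow> x + y \<in> G b"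
  using graded by (simp add: graded_vs_def)

lemma graded_vs_scale: "x \<in> G b \<Longrightarrow> s c x \<in> G b"
  using graded by (simp add: graded_vs_def)

lemma graded_vs_neg:
  assumes "x \<in> G b"
  shows "- x \<in> G b"
proof -
  interpret vector_space s by (rule graded_vs_vector_space)
  show ?thesis using graded_vs_scale[OF assms, of "- 1"] by (simp add: scale_minus_left)
qed

lemma graded_vs_diff: "x \<in> G b \<Longrightarrow> y \<in> G b \<Longrightarrow> x - y \<in> G b"
  using graded_vs_add[of x b "- y"] graded_vs_neg[of y b] by simp

lemma graded_vs_inter_zero: "x \<in> G b \<Longrightarrow> x \<in> G (\<not> b) \<Longrightarrow> x = 0"
  using graded unfolding graded_vs_def by (cases b) auto

lemma gproj_spec: "gproj G b x \<in> G b \<and> x - gproj G b x \<in> G (\<not> b)"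
proof -
  obtain x0 x1 where x: "x0 \<in> G False" "x1 \<in> G True" "x = x0 + x1"
    using graded unfolding graded_vs_def by blast
  have "\<exists>a. a \<in> G b \<and> x - a \<in> G (\<not> b)"
    using x by (cases b) auto
  moreover have "a = a'" if "a \<in> G b" "x - a \<in> G (\<not> b)" "a' \<in> G b" "x - a' \<in> G (\<not> b)" for a a'
  proof -
    have "a - a' = (x - a') - (x - a)" by simp
    then have "a - a' \<in> G (\<not> b)" using that graded_vs_diff by metis
    then show "a = a'" using that graded_vs_diff graded_vs_inter_zero by fastforce
  qed
  ultimately have "\<exists>!a. a \<in> G b \<and> x - a \<in> G (\<not> b)" by blast
  then show ?thesis unfolding gproj_def by (rule theI')
qed

lemma gproj_mem: "gproj G b x \<in> G b"
  using gproj_spec by blast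

lemma gproj_eqI:
  assumes "a \<in> G b" "x - a \<in> G (\<not> b)"
  shows "gproj G b x = a"
proof -
  have "gproj G b x - a = (x - a) - (x - gproj G b x)" by simp
  then have "gproj G b x - a \<in> G (\<not> b)" using assms gproj_spec graded_vs_diff by metis
  moreover have "gproj G b x - a \<in> G b" using assms gproj_mem graded_vs_diff by blast
  ultimately show ?thesis using graded_vs_inter_zero by fastforce
qed

lemma gproj_homogeneous: "x \<in> G c \<Longrightarrow> gproj G b x = (if b = c then x else 0)"
  by (cases b; cases c) (auto intro!: gproj_eqI simp: graded_vs_zero)

lemma gproj_self: "x \<in> G b \<Longrightarrow> gproj G b x = x"
  by (simp add: gproj_homogeneous)

lemma gproj_False_add_True: "gproj G False x + gproj G True x = x"
proof -
  have "gproj G True x = x - gproj G False x"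
    using gproj_spec[of False x] by (intro gproj_eqI) auto
  then show ?thesis by simp
qed

lemma gproj_add: "gproj G b (x + y) = gproj G b x + gproj G b y"
proof (rule gproj_eqI)
  show "gproj G b x + gproj G b y \<in> G b" using gproj_mem graded_vs_add by blast
  have "x + y - (gproj G b x + gproj G b y) = (x - gproj G b x) + (y - gproj G b y)" by simp
  then show "x + y - (gproj G b x + gproj G b y) \<in> G (\<not> b)"
    using gproj_spec graded_vs_add by metis
qed

lemma gproj_zero: "gproj G b 0 = 0"
  using gproj_self graded_vs_zero by blast

lemma gproj_diff: "gproj G b (x - y) = gproj G b x - gproj G b y"
  using gproj_add[of b "x - y" y] by (simp add: eq_diff_eq)

lemma gproj_scale: "gproj G b (s c x) = s c (gproj G b x)"
proof (rule gproj_eqI)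
  interpret vector_space s by (rule graded_vs_vector_space)
  show "s c (gproj G b x) \<in> G b" using gproj_mem graded_vs_scale by blast
  have "s c x - s c (gproj G b x) = s c (x - gproj G b x)" by (simp add: scale_right_diff_distrib)
  then show "s c x - s c (gproj G b x) \<in> G (\<not> b)" using gproj_spec graded_vs_scale by metis
qed

end

section \<open>Additive endomorphisms of a product\<close>

text \<open>The nontrivial second factor makes this a \<open>ring_1\<close>; below it is \<open>M \<times> \<bbbk>\<close>, so that a vector \<open>v\<close>
  is recovered as the first component of the image of \<open>(0, 1)\<close>.\<close>

typedef (overloaded) ('a, 'b) add_endo =
  "{f :: ('a::ab_group_add \<times> 'b::{ab_group_add, zero_neq_one}) \<Rightarrow> 'a \<times> 'b.
     \<forall>x y. f (fst x + fst y, snd x + snd y) = (fst (f x) + fst (f y), snd (f x) + snd (f y))}"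
  morphisms endo_app Add_Endo
  by (rule exI[of _ id]) simp

setup_lifting type_definition_add_endo

instantiation add_endo :: (ab_group_add, "{ab_group_add, zero_neq_one}") ring_1
begin

lift_definition zero_add_endo :: "('a, 'b) add_endo" is "\<lambda>_. (0, 0)"
  by simp

lift_definition one_add_endo :: "('a, 'b) add_endo" is "\<lambda>x. x"
  by simp

lift_definition plus_add_endo :: "('a, 'b) add_endo \<Rightarrow> ('a, 'b) add_endo \<Rightarrow> ('a, 'b) add_endo"
  is "\<lambda>f g x. (fst (f x) + fst (g x), snd (f x) + snd (g x))"
  by (simp add: algebra_simps)

lift_definition uminus_add_endo :: "('a, 'b) add_endo \<Rightarrow> ('a, 'b) add_endo"
  is "\<lambda>f x. (- fst (f x), - snd (f x))"
  by simp

lift_definition minus_add_endo :: "('a, 'b) add_endo \<Rightarrow> ('a, 'b) add_endo \<Rightarrow> ('a, 'b) add_endo"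
  is "\<lambda>f g x. (fst (f x) - fst (g x), snd (f x) - snd (g x))"
  by (simp add: algebra_simps)

lift_definition times_add_endo :: "('a, 'b) add_endo \<Rightarrow> ('a, 'b) add_endo \<Rightarrow> ('a, 'b) add_endo"
  is "\<lambda>f g x. f (g x)"
  by (simp only: mem_Collect_eq)

instance
proof
  fix a b c :: "('a, 'b) add_endo"
  show "a + b + c = a + (b + c)" by transfer (simp add: add.assoc)
  show "a + b = b + a" by transfer (simp add: add.commute)
  show "0 + a = a" by transfer simp
  show "- a + a = 0" by transfer simp
  show "a - b = a + - b" by transfer simp
  show "a * b * c = a * (b * c)" by transfer simp
  show "1 * a = a" by transfer simp
  show "a * 1 = a" by transfer simp
  show "(a + b) * c = a * c + b * c" by transfer simp
  show "a * (b + c) = a * b + a * c" by transfer (rule ext, blast)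
  show "(0::('a, 'b) add_endo) \<noteq> 1"
  proof
    assume "(0::('a, 'b) add_endo) = 1"
    then have "endo_app (0::('a, 'b) add_endo) (0, 1) = endo_app 1 (0, 1)" by simp
    then show False by transfer simp
  qed
qed

end

lemma add_endo_eqI: "(\<And>x. endo_app f x = endo_app g x) \<Longrightarrow> f = g"
  by (metis endo_app_inject ext)

lemma endo_app_Add_Endo:
  "(\<And>x y. f (fst x + fst y, snd x + snd y) = (fst (f x) + fst (f y), snd (f x) + snd (f y)))
     \<Longrightarrow> endo_app (Add_Endo f) = f"
  by (rule Add_Endo_inverse) blast

lemma endo_app_zero: "endo_app 0 x = (0, 0)"
  by transfer simp

lemma endo_app_one: "endo_app 1 x = x"
  by transfer simp

lemma endo_app_plus:
  "endo_app (f + g) x = (fst (endo_app f x) + fst (endo_app g x), snd (endo_app f x) + snd (endo_app g x))"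
  by transfer simp

lemma endo_app_minus:
  "endo_app (f - g) x = (fst (endo_app f x) - fst (endo_app g x), snd (endo_app f x) - snd (endo_app g x))"
  by transfer simp

lemma endo_app_uminus: "endo_app (- f) x = (- fst (endo_app f x), - snd (endo_app f x))"
  by transfer simp

lemma endo_app_times: "endo_app (f * g) x = endo_app f (endo_app g x)"
  by transfer simp

lemma endo_app_sum:
  "finite A \<Longrightarrow> endo_app (\<Sum>i\<in>A. f i) x
     = (\<Sum>i\<in>A. fst (endo_app (f i) x), \<Sum>i\<in>A. snd (endo_app (f i) x))"
  by (induction A rule: finite_induct) (simp_all add: endo_app_zero endo_app_plus)

definition endo_transl :: "('a::ab_group_add, 'b::{ab_group_add, zero_neq_one}) add_endo \<Rightarrow> 'a" where
  "endo_transl T = fst (endo_app T (0, 1))"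

lemma endo_transl_add: "endo_transl (T + U) = endo_transl T + endo_transl U"
  by (simp add: endo_transl_def endo_app_plus)

lemma endo_transl_sum: "finite A \<Longrightarrow> endo_transl (\<Sum>i\<in>A. f i) = (\<Sum>i\<in>A. endo_transl (f i))"
  by (simp add: endo_transl_def endo_app_sum)

section \<open>Restricted representations\<close>

locale restricted_rep =
  fixes p :: nat
    and sL :: "'k::field \<Rightarrow> 'l::ab_group_add \<Rightarrow> 'l" and G :: "bool \<Rightarrow> 'l set"
    and br :: "'l \<Rightarrow> 'l \<Rightarrow> 'l" and pp :: "'l \<Rightarrow> 'l"
    and sM :: "'k \<Rightarrow> 'm::ab_group_add \<Rightarrow> 'm" and GM :: "bool \<Rightarrow> 'm set"
    and act :: "'l \<Rightarrow> 'm \<Rightarrow> 'm"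
  assumes char: "CHAR('k) = p" and prime: "prime p" and p_gt_2: "p > 2"
    and restricted_algebra: "restricted_lie_superalgebra p sL G br pp"
    and restricted_module: "restricted_module p sL G br pp sM GM act"
begin

lemma graded_L: "graded_vs sL G"
  using restricted_algebra by (simp add: restricted_lie_superalgebra_def lie_superalgebra_def)

lemma graded_M: "graded_vs sM GM"
  using restricted_module by (simp add: restricted_module_def)

sublocale M: vector_space sM
  by (rule graded_vs_vector_space[OF graded_M])

lemma odd_p: "odd p"
  using prime p_gt_2 prime_odd_nat by auto

lemma lie_superalgebra: "lie_superalgebra sL G br"
  using restricted_algebra by (simp add: restricted_lie_superalgebra_def)

lemma br_mem: "x \<in> G a \<Longrightarrow> y \<in> G b \<Longrightarrow> br x y \<in> G (a \<noteq> b)"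
  using lie_superalgebra unfolding lie_superalgebra_def by blast

lemma br_skew: "x \<in> G a \<Longrightarrow> y \<in> G b \<Longrightarrow> br x y = - sg (a \<and> b) (br y x)"
  using lie_superalgebra unfolding lie_superalgebra_def by blast

lemma br_jacobi: "x \<in> G a \<Longrightarrow> y \<in> G b \<Longrightarrow> z \<in> G c
    \<Longrightarrow> br x (br y z) = br (br x y) z + sg (a \<and> b) (br y (br x z))"
  using lie_superalgebra unfolding lie_superalgebra_def by blast

lemma pp_mem: "x \<in> G False \<Longrightarrow> pp x \<in> G False"
  using restricted_algebra unfolding restricted_lie_superalgebra_def by blast

lemma pp_scale: "x \<in> G False \<Longrightarrow> pp (sL c x) = sL (c ^ p) (pp x)"
  using restricted_algebra unfolding restricted_lie_superalgebra_def by blast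

lemma pp_add: "x \<in> G False \<Longrightarrow> y \<in> G False \<Longrightarrow> pp (x + y) = pp x + pp y
    + (\<Sum>S\<in>Pow {3..p}. sL (inverse (of_nat (card S + 1))) (lnb br (pseq x y S) (p - 1)))"
  using restricted_algebra unfolding restricted_lie_superalgebra_def by blast

lemma br_pp: "x \<in> G False \<Longrightarrow> br (pp x) y = (br x ^^ p) y"
  using restricted_algebra unfolding restricted_lie_superalgebra_def by blast

lemma act_mem: "x \<in> G a \<Longrightarrow> m \<in> GM b \<Longrightarrow> act x m \<in> GM (a \<noteq> b)"
  using restricted_module unfolding restricted_module_def by blast

lemma act_br: "x \<in> G a \<Longrightarrow> y \<in> G b
    \<Longrightarrow> act (br x y) m = act x (act y m) - sg (a \<and> b) (act y (act x m))"
  using restricted_module unfolding restricted_module_def by blast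

lemma act_pp: "x \<in> G False \<Longrightarrow> (act x ^^ p) m = act (pp x) m"
  using restricted_module unfolding restricted_module_def by blast

lemma module_L: "module sL"
  using graded_vs_vector_space[OF graded_L] by (simp add: module_iff_vector_space)

lemma module_M: "module sM"
  using graded_vs_vector_space[OF graded_M] by (simp add: module_iff_vector_space)

sublocale br_left: module_hom sL sL "\<lambda>x. br x y" for y
  using lie_superalgebra
  by (intro module_hom.intro module_L module_hom_axioms.intro) (simp_all add: lie_superalgebra_def)

sublocale br_right: module_hom sL sL "br x" for x
  using lie_superalgebra
  by (intro module_hom.intro module_L module_hom_axioms.intro) (simp_all add: lie_superalgebra_def)

sublocale act_left: module_hom sL sM "\<lambda>x. act x m" for m
  using restricted_module
  by (intro module_hom.intro module_L module_M module_hom_axioms.intro)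
    (simp_all add: restricted_module_def)

sublocale act_right: module_hom sM sM "act x" for x
  using restricted_module
  by (intro module_hom.intro module_M module_hom_axioms.intro) (simp_all add: restricted_module_def)

lemma sg_mem: "m \<in> GM b \<Longrightarrow> sg c m \<in> GM b"
  by (cases c) (auto intro: graded_vs_neg[OF graded_M])

sublocale act_power: module_hom sM sM "act x ^^ n" for x n
proof (intro module_hom.intro module_M module_hom_axioms.intro)
  show "(act x ^^ n) (m + m') = (act x ^^ n) m + (act x ^^ n) m'" for m m'
    by (induction n) (simp_all add: act_right.add)
  show "(act x ^^ n) (sM c m) = sM c ((act x ^^ n) m)" for c m
    by (induction n) (simp_all add: act_right.scale)
qed

lemma act_power_sg: "(act y ^^ n) (sg b m) = sg b ((act y ^^ n) m)"
  by (cases b) (simp_all add: act_power.neg)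

lemma scale_sg: "sM c (sg b m) = sg b (sM c m)"
  by (cases b) (simp_all add: M.scale_minus_right)

lemma alternating_sum_telescope:
  "(\<Sum>i<n. sM ((-1) ^ i) (f i + f (Suc i))) = f 0 - sM ((-1) ^ n) (f n)"
  by (induction n) (simp_all add: M.scale_right_distrib M.scale_minus_left algebra_simps)

lemma act_power_scale_left: "(act (sL c x) ^^ n) m = sM (c ^ n) ((act x ^^ n) m)"
  by (induction n) (simp_all add: act_left.scale act_right.scale mult.commute)

lemma act_gproj:
  assumes "y \<in> G False"
  shows "gproj GM b (act y m) = act y (gproj GM b m)"
proof (rule gproj_eqI[OF graded_M])
  show "act y (gproj GM b m) \<in> GM b"
    using act_mem[OF assms gproj_mem[OF graded_M]] by simp
  have "act y m - act y (gproj GM b m) = act y (m - gproj GM b m)"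
    by (simp add: act_right.diff)
  then show "act y m - act y (gproj GM b m) \<in> GM (\<not> b)"
    using act_mem[OF assms, of "m - gproj GM b m" "\<not> b"] gproj_spec[OF graded_M] by simp
qed

lemma act_power_gproj: "y \<in> G False \<Longrightarrow> gproj GM b ((act y ^^ n) m) = (act y ^^ n) (gproj GM b m)"
  by (induction n) (simp_all add: act_gproj)

lemma lnb_mem_even: "(\<And>i. xs i \<in> G False) \<Longrightarrow> lnb br xs n \<in> G False"
  by (induction n) (use br_mem in fastforce)+

lemma br_right_power_mem: "x \<in> G a \<Longrightarrow> y \<in> G False \<Longrightarrow> ((\<lambda>z. br z y) ^^ k) x \<in> G a"
  by (induction k) (use br_mem in fastforce)+

lemma br_right_power_p:
  assumes x: "x \<in> G a" and y: "y \<in> G False"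
  shows "((\<lambda>z. br z y) ^^ p) x = br x (pp y)"
proof -
  have "((\<lambda>z. br z y) ^^ k) x = sg (odd k) ((br y ^^ k) x)" for k
  proof (induction k)
    case 0
    then show ?case by simp
  next
    case (Suc k)
    have "((\<lambda>z. br z y) ^^ Suc k) x = - br y (((\<lambda>z. br z y) ^^ k) x)"
      using br_skew[OF br_right_power_mem[OF x y, of k] y] by simp
    then show ?case using Suc by (cases "odd k") (simp_all add: br_right.neg)
  qed
  then have "((\<lambda>z. br z y) ^^ p) x = - br (pp y) x"
    using odd_p br_pp[OF y, of x] by simp
  also have "\<dots> = br x (pp y)"
    using br_skew[OF pp_mem[OF y] x] by simp
  finally show ?thesis .
qed

definition affine :: "'l \<Rightarrow> 'm \<Rightarrow> ('m, 'k) add_endo" where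
  "affine z v = Add_Endo (\<lambda>mc. (act z (fst mc) + sM (snd mc) v, 0))"

lemma endo_app_affine: "endo_app (affine z v) mc = (act z (fst mc) + sM (snd mc) v, 0)"
  unfolding affine_def
  by (subst endo_app_Add_Endo) (simp_all add: act_right.add M.scale_left_distrib add_ac)

lemma affine_add: "affine z u + affine w v = affine (z + w) (u + v)"
  by (rule add_endo_eqI)
    (simp add: endo_app_plus endo_app_affine act_left.add M.scale_right_distrib add_ac)

lemma commutator_affine:
  assumes "z \<in> G a" "w \<in> G False"
  shows "commutator (affine z u) (affine w v) = affine (br z w) (act z v - act w u)"
  unfolding commutator_def
  by (rule add_endo_eqI)
    (simp add: endo_app_minus endo_app_times endo_app_affine act_right.add act_right.scale
      act_br[OF assms] M.scale_right_diff_distrib algebra_simps)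

lemma endo_app_affine_power:
  "endo_app (affine z v ^ Suc n) mc = ((act z ^^ Suc n) (fst mc) + sM (snd mc) ((act z ^^ n) v), 0)"
proof (induction n arbitrary: mc)
  case 0
  then show ?case by (simp add: endo_app_affine)
next
  case (Suc n)
  have "affine z v ^ Suc (Suc n) = affine z v * affine z v ^ Suc n" by (rule power_Suc)
  then show ?case
    by (simp only: endo_app_times Suc.IH)
      (simp add: endo_app_affine act_right.add act_right.scale)
qed

lemma endo_app_affine_zero_power: "endo_app (affine y 0 ^ n) (m, 0) = ((act y ^^ n) m, 0)"
proof (induction n arbitrary: m)
  case 0
  then show ?case by (simp add: endo_app_one)
next
  case (Suc n)
  have "affine y 0 ^ Suc n = affine y 0 ^ n * affine y 0" by (rule power_Suc2)
  then show ?case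
    by (simp only: endo_app_times) (simp add: endo_app_affine Suc.IH funpow_swap1)
qed

lemma endo_app_of_nat: "endo_app (of_nat n :: ('m, 'k) add_endo) mc = (sM (of_nat n) (fst mc), of_nat n * snd mc)"
proof (induction n)
  case 0
  then show ?case by (simp add: endo_app_zero)
next
  case (Suc n)
  have "(of_nat (Suc n) :: ('m, 'k) add_endo) = 1 + of_nat n" by simp
  then show ?case
    by (simp only: endo_app_plus endo_app_one Suc.IH) (simp add: M.scale_left_distrib algebra_simps)
qed

lemma of_nat_p_add_endo: "of_nat p = (0 :: ('m, 'k) add_endo)"
proof -
  have "of_nat p = (0::'k)" using char by (metis of_nat_CHAR)
  then show ?thesis by (intro add_endo_eqI) (simp add: endo_app_of_nat endo_app_zero)
qed

lemma endo_transl_affine: "endo_transl (affine z v) = v"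
  by (simp add: endo_transl_def endo_app_affine)

lemma endo_transl_of_nat_mult:
  "endo_transl (of_nat n * T :: ('m, 'k) add_endo) = sM (of_nat n) (endo_transl T)"
  by (simp add: endo_transl_def endo_app_times endo_app_of_nat)

lemma endo_transl_affine_power: "endo_transl (affine z v ^ Suc n) = (act z ^^ n) v"
  by (simp add: endo_transl_def endo_app_affine_power del: power_Suc)

primrec lnb_transl :: "(nat \<Rightarrow> 'l) \<Rightarrow> (nat \<Rightarrow> 'm) \<Rightarrow> nat \<Rightarrow> 'm" where
  "lnb_transl xs vs 0 = vs 1"
| "lnb_transl xs vs (Suc n) =
     act (lnb br xs n) (vs (Suc (Suc n))) - act (xs (Suc (Suc n))) (lnb_transl xs vs n)"

lemma lnb_affine:
  assumes "\<And>i. xs i \<in> G False"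
  shows "lnb commutator (\<lambda>i. affine (xs i) (vs i)) n = affine (lnb br xs n) (lnb_transl xs vs n)"
  by (induction n) (simp_all add: commutator_affine[OF lnb_mem_even[OF assms] assms])

lemma fst_endo_app_minus_one_power_mult:
  "fst (endo_app ((-1) ^ i * T :: ('m, 'k) add_endo) mc) = sM ((-1) ^ i) (fst (endo_app T mc))"
  by (cases "even i") (simp_all add: endo_app_times endo_app_uminus endo_app_one M.scale_minus_left)

lemma alternating_act_sum:
  assumes x: "x \<in> G a" and y: "y \<in> G False"
  shows "(\<Sum>i<p. sM ((-1) ^ i) ((act y ^^ i) (act (((\<lambda>z. br z y) ^^ (p - 1 - i)) x) m)))
       = act x ((act y ^^ (p - 1)) m)"
proof -
  define X where "X = affine x 0"
  define Y where "Y = affine y 0"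
  have ad_X: "((\<lambda>w. commutator w Y) ^^ k) X = affine (((\<lambda>z. br z y) ^^ k) x) 0" for k
    by (induction k) (simp_all add: X_def Y_def commutator_affine[OF br_right_power_mem[OF x y] y])
  have "fst (endo_app (\<Sum>i<p. (-1) ^ i * (Y ^ i * ((\<lambda>w. commutator w Y) ^^ (p - 1 - i)) X)) (m, 0))
      = (\<Sum>i<p. sM ((-1) ^ i) ((act y ^^ i) (act (((\<lambda>z. br z y) ^^ (p - 1 - i)) x) m)))"
    by (simp only: endo_app_sum[OF finite_lessThan] fst_conv fst_endo_app_minus_one_power_mult ad_X)
      (simp add: endo_app_times endo_app_affine Y_def endo_app_affine_zero_power)
  moreover have "fst (endo_app (X * Y ^ (p - 1)) (m, 0)) = act x ((act y ^^ (p - 1)) m)"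
    by (simp add: endo_app_times X_def Y_def endo_app_affine_zero_power endo_app_affine)
  ultimately show ?thesis
    using alternating_commutator_sum_prime[OF prime of_nat_p_add_endo, of Y X] by simp
qed

lemma sum_Pow_regroup_by_card:
  "(\<Sum>i=1..p-1. sM (inverse (of_nat i)) (\<Sum>S | S \<in> Pow {3..p} \<and> card S = i - 1. W S))
     = (\<Sum>S\<in>Pow {3..p}. sM (inverse (of_nat (card S + 1))) (W S))"
proof -
  have "(\<lambda>S. card S + 1) ` Pow {3..p} \<subseteq> {1..p-1}"
  proof
    fix k assume "k \<in> (\<lambda>S. card S + 1) ` Pow {3..p}"
    then obtain S where S: "S \<subseteq> {3..p}" "k = card S + 1" by auto
    have "card S \<le> card {3..p}" using S(1) by (intro card_mono) auto
    then show "k \<in> {1..p-1}" using S(2) p_gt_2 by auto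
  qed
  then have "(\<Sum>S\<in>Pow {3..p}. sM (inverse (of_nat (card S + 1))) (W S))
      = (\<Sum>i=1..p-1. \<Sum>S | S \<in> Pow {3..p} \<and> card S + 1 = i. sM (inverse (of_nat (card S + 1))) (W S))"
    by (intro sum.group[symmetric]) auto
  also have "\<dots> = (\<Sum>i=1..p-1. sM (inverse (of_nat i))
      (\<Sum>S | S \<in> Pow {3..p} \<and> card S = i - 1. W S))"
  proof (intro sum.cong refl)
    fix i assume i: "i \<in> {1..p-1}"
    then have "card S + 1 = i \<longleftrightarrow> card S = i - 1" for S :: "nat set"
      by auto
    then show "(\<Sum>S | S \<in> Pow {3..p} \<and> card S + 1 = i. sM (inverse (of_nat (card S + 1))) (W S))
        = sM (inverse (of_nat i)) (\<Sum>S | S \<in> Pow {3..p} \<and> card S = i - 1. W S)"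
      unfolding M.scale_sum_right by (intro sum.cong) (use i in \<open>auto simp: of_nat_diff\<close>)
  qed
  finally show ?thesis by simp
qed

lemma endo_transl_jacobson_coeff:
  assumes x: "x \<in> G False" and y: "y \<in> G False" and i: "i \<in> {1..p-1}"
  shows "endo_transl (fps_nth (jacobson_fps (affine x u) (affine y v) ^ p) i)
       = sM (inverse (of_nat i))
           (\<Sum>S | S \<in> Pow {3..p} \<and> card S = i - 1. lnb_transl (pseq x y S) (pseq u v S) (p - 1))"
proof -
  let ?H = "fps_nth (jacobson_fps (affine x u) (affine y v) ^ p) i"
  let ?\<Sigma> = "\<Sum>S | S \<in> Pow {3..p} \<and> card S = i - 1. lnb_transl (pseq x y S) (pseq u v S) (p - 1)"
  have pseq_affine: "pseq (affine x u) (affine y v) S = (\<lambda>i. affine (pseq x y S i) (pseq u v S i))" for S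
    by (auto simp: pseq_def)
  have pseq_even: "pseq x y S k \<in> G False" for S k
    using x y by (simp add: pseq_def)
  have "of_nat i * ?H = (\<Sum>S | S \<in> Pow {3..p} \<and> card S = i - 1.
      affine (lnb br (pseq x y S) (p - 1)) (lnb_transl (pseq x y S) (pseq u v S) (p - 1)))"
    using i by (simp add: of_nat_mult_jacobson_fps_coeff[OF prime p_gt_2 of_nat_p_add_endo]
        pseq_affine lnb_affine pseq_even)
  then have "sM (of_nat i) (endo_transl ?H) = ?\<Sigma>"
    by (simp add: endo_transl_of_nat_mult[symmetric] endo_transl_sum endo_transl_affine)
  moreover have "of_nat i \<noteq> (0::'k)"
    using i char by (auto simp: of_nat_eq_0_iff_char_dvd dest: dvd_imp_le)
  ultimately show ?thesis by (metis M.scale_one M.scale_scale left_inverse)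
qed

lemma act_power_add_jacobson:
  assumes x: "x \<in> G False" and y: "y \<in> G False"
  shows "(act (x + y) ^^ (p - 1)) (u + v) = (act x ^^ (p - 1)) u + (act y ^^ (p - 1)) v
     + (\<Sum>S\<in>Pow {3..p}. sM (inverse (of_nat (card S + 1))) (lnb_transl (pseq x y S) (pseq u v S) (p - 1)))"
proof -
  define A where "A = affine x u"
  define B where "B = affine y v"
  have p_Suc: "p = Suc (p - 1)" using p_gt_2 by simp
  have "(A + B) ^ p = A ^ p + B ^ p + (\<Sum>i=1..p-1. fps_nth (jacobson_fps A B ^ p) i)"
    by (rule power_add_jacobson_fps_coeffs) (use p_gt_2 in simp)
  then have "endo_transl ((A + B) ^ p) = endo_transl (A ^ p) + endo_transl (B ^ p)
      + (\<Sum>i=1..p-1. endo_transl (fps_nth (jacobson_fps A B ^ p) i))"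
    by (simp add: endo_transl_add endo_transl_sum)
  moreover have "endo_transl ((A + B) ^ p) = (act (x + y) ^^ (p - 1)) (u + v)"
    unfolding A_def B_def affine_add by (subst p_Suc) (simp only: endo_transl_affine_power)
  moreover have "endo_transl (A ^ p) = (act x ^^ (p - 1)) u"
    unfolding A_def by (subst p_Suc) (simp only: endo_transl_affine_power)
  moreover have "endo_transl (B ^ p) = (act y ^^ (p - 1)) v"
    unfolding B_def by (subst p_Suc) (simp only: endo_transl_affine_power)
  ultimately show ?thesis
    unfolding A_def B_def
    by (simp only: sum.cong[OF refl endo_transl_jacobson_coeff[OF x y]] sum_Pow_regroup_by_card)
qed

end

section \<open>The coboundary of a 1-cochain\<close>

locale restricted_1cochain = restricted_rep p sL G br pp sM GM act
  for p :: nat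
    and sL :: "'k::field \<Rightarrow> 'l::ab_group_add \<Rightarrow> 'l" and G :: "bool \<Rightarrow> 'l set"
    and br :: "'l \<Rightarrow> 'l \<Rightarrow> 'l" and pp :: "'l \<Rightarrow> 'l"
    and sM :: "'k \<Rightarrow> 'm::ab_group_add \<Rightarrow> 'm" and GM :: "bool \<Rightarrow> 'm set"
    and act :: "'l \<Rightarrow> 'm \<Rightarrow> 'm" +
  fixes psi :: "'l \<Rightarrow> 'm"
  assumes linear: "Vector_Spaces.linear sL sM psi"
begin

sublocale psi: module_hom sL sM psi
  using linear by (simp add: module_hom_iff_linear)

abbreviation psi_part :: "bool \<Rightarrow> 'l \<Rightarrow> 'm" where
  "psi_part j \<equiv> cpart1 G GM j psi"

abbreviation dpsi :: "'l \<Rightarrow> 'l \<Rightarrow> 'm" where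
  "dpsi \<equiv> dCE1 G br GM act psi"

abbreviation dpsi_part :: "bool \<Rightarrow> bool \<Rightarrow> bool \<Rightarrow> 'l \<Rightarrow> 'l \<Rightarrow> 'm" where
  "dpsi_part j a b \<equiv> dCE1_h br act j a b (psi_part j)"

sublocale psi_part: module_hom sL sM "psi_part j" for j
  by (intro module_hom.intro module_L module_M module_hom_axioms.intro)
    (simp_all add: cpart1_def gproj_add[OF graded_L] gproj_add[OF graded_M] psi.add sum.distrib
      gproj_scale[OF graded_L] gproj_scale[OF graded_M] psi.scale M.scale_sum_right)

lemma psi_part_homogeneous: "x \<in> G i \<Longrightarrow> psi_part j x = gproj GM (i \<noteq> j) (psi x)"
  unfolding cpart1_def sum_UNIV_bool
  by (cases i) (simp_all add: gproj_homogeneous[OF graded_L] gproj_zero[OF graded_M])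

lemma psi_part_mem: "x \<in> G i \<Longrightarrow> psi_part j x \<in> GM (i \<noteq> j)"
  by (simp add: psi_part_homogeneous gproj_mem[OF graded_M])

lemma psi_part_False_add_True: "psi_part False x + psi_part True x = psi x"
proof -
  have "psi_part False x + psi_part True x
      = (gproj GM False (psi (gproj G False x)) + gproj GM True (psi (gproj G False x)))
        + (gproj GM False (psi (gproj G True x)) + gproj GM True (psi (gproj G True x)))"
    unfolding cpart1_def sum_UNIV_bool by (simp add: add_ac)
  also have "\<dots> = psi (gproj G False x + gproj G True x)"
    by (simp only: gproj_False_add_True[OF graded_M] psi.add)
  finally show ?thesis by (simp only: gproj_False_add_True[OF graded_L])
qed

lemma dpsi_part_mem: "u \<in> G a \<Longrightarrow> v \<in> G b \<Longrightarrow> dpsi_part j a b u v \<in> GM ((a \<noteq> b) \<noteq> j)"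
proof -
  assume u: "u \<in> G a" and v: "v \<in> G b"
  have "psi_part j (br u v) \<in> GM ((a \<noteq> b) \<noteq> j)"
    using psi_part_mem br_mem[OF u v] by blast
  moreover have "act u (psi_part j v) \<in> GM ((a \<noteq> b) \<noteq> j)"
    using act_mem[OF u psi_part_mem[OF v, of j]] by (cases a; cases b; cases j) auto
  moreover have "act v (psi_part j u) \<in> GM ((a \<noteq> b) \<noteq> j)"
    using act_mem[OF v psi_part_mem[OF u, of j]] by (cases a; cases b; cases j) auto
  ultimately show ?thesis unfolding dCE1_h_def
    by (intro graded_vs_add[OF graded_M] graded_vs_diff[OF graded_M] sg_mem)
qed

lemma dpsi_part_zero_left [simp]: "dpsi_part j a b 0 v = 0"
  by (simp add: dCE1_h_def sg_def)

lemma dpsi_part_zero_right [simp]: "dpsi_part j a b u 0 = 0"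
  by (simp add: dCE1_h_def sg_def)

lemma dpsi_zero_left [simp]: "dpsi 0 v = 0"
  by (simp add: dCE1_def gproj_zero[OF graded_L])

lemma dpsi_zero_right [simp]: "dpsi u 0 = 0"
  by (simp add: dCE1_def gproj_zero[OF graded_L])

lemma dpsi_homogeneous:
  "u \<in> G a \<Longrightarrow> v \<in> G b \<Longrightarrow> dpsi u v = dpsi_part False a b u v + dpsi_part True a b u v"
  unfolding dCE1_def sum_UNIV_bool by (cases a; cases b) (simp_all add: gproj_homogeneous[OF graded_L])

lemma cpart2_dpsi: "u \<in> G a \<Longrightarrow> v \<in> G b \<Longrightarrow> cpart2 G GM j dpsi u v = dpsi_part j a b u v"
proof -
  assume u: "u \<in> G a" and v: "v \<in> G b"
  have "cpart2 G GM j dpsi u v = gproj GM ((a \<noteq> b) \<noteq> j) (dpsi u v)"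
    unfolding cpart2_def sum_UNIV_bool
    by (cases a; cases b)
      (simp_all add: gproj_homogeneous[OF graded_L u] gproj_homogeneous[OF graded_L v]
        gproj_zero[OF graded_M])
  also have "\<dots> = dpsi_part j a b u v"
    unfolding dpsi_homogeneous[OF u v] gproj_add[OF graded_M]
      gproj_homogeneous[OF graded_M dpsi_part_mem[OF u v]]
    by (cases j) auto
  finally show ?thesis .
qed

lemma dpsi_even:
  assumes "u \<in> G False" "v \<in> G False"
  shows "dpsi u v = psi (br u v) - act u (psi v) + act v (psi u)"
proof -
  have "dpsi u v = (psi_part False (br u v) + psi_part True (br u v))
      - act u (psi_part False v + psi_part True v) + act v (psi_part False u + psi_part True u)"
    unfolding dpsi_homogeneous[OF assms] dCE1_h_def by (simp add: act_right.add algebra_simps)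
  then show ?thesis by (simp only: psi_part_False_add_True)
qed

lemma dCE2_h_dpsi_homogeneous:
  assumes u: "u \<in> G a" and v: "v \<in> G b" and w: "w \<in> G c"
  shows "dCE2_h br act j a b c (cpart2 G GM j dpsi) u v w = 0"
proof -
  have uv: "br u v \<in> G (a \<noteq> b)" and uw: "br u w \<in> G (a \<noteq> c)" and vw: "br v w \<in> G (b \<noteq> c)"
    using br_mem u v w by blast+
  have "dCE2_h br act j a b c (cpart2 G GM j dpsi) u v w =
     dpsi_part j (a \<noteq> b) c (br u v) w - sg (b \<and> c) (dpsi_part j (a \<noteq> c) b (br u w) v)
     - dpsi_part j a (b \<noteq> c) u (br v w)
     - sg (a \<and> j) (act u (dpsi_part j b c v w))
     + sg (b \<and> (j \<noteq> a)) (act v (dpsi_part j a c u w))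
     - sg (c \<and> ((j \<noteq> a) \<noteq> b)) (act w (dpsi_part j a b u v))"
    unfolding dCE2_h_def using u v w uv uw vw by (simp add: cpart2_dpsi)
  also have "\<dots> = 0"
    unfolding dCE1_h_def br_jacobi[OF u v w] br_skew[OF v uw]
    by (cases a; cases b; cases c; cases j)
      (simp_all add: act_br[OF u v] act_br[OF u w] act_br[OF v w] psi_part.add psi_part.neg
        psi_part.diff act_right.add act_right.neg act_right.diff algebra_simps)
  finally show ?thesis .
qed

lemma dCE2_dpsi: "dCE2 G br GM act dpsi u v w = 0"
  unfolding dCE2_def
  by (intro sum.neutral ballI dCE2_h_dpsi_homogeneous gproj_mem[OF graded_L])

lemma dpsi_part_add_left: "dpsi_part j a b (u + u') v = dpsi_part j a b u v + dpsi_part j a b u' v"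
  by (simp add: dCE1_h_def br_left.add psi_part.add act_left.add act_right.add sg_add algebra_simps)

lemma dpsi_part_add_right: "dpsi_part j a b u (v + v') = dpsi_part j a b u v + dpsi_part j a b u v'"
  by (simp add: dCE1_h_def br_right.add psi_part.add act_left.add act_right.add sg_add algebra_simps)

lemma dpsi_part_scale_left: "dpsi_part j a b (sL c u) v = sM c (dpsi_part j a b u v)"
  by (simp add: dCE1_h_def br_left.scale psi_part.scale act_left.scale act_right.scale scale_sg
      M.scale_right_diff_distrib M.scale_right_distrib)

lemma dpsi_part_scale_right: "dpsi_part j a b u (sL c v) = sM c (dpsi_part j a b u v)"
  by (simp add: dCE1_h_def br_right.scale psi_part.scale act_left.scale act_right.scale scale_sg
      M.scale_right_diff_distrib M.scale_right_distrib)

lemma dpsi_part_skew: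
  "x \<in> G a \<Longrightarrow> y \<in> G b \<Longrightarrow> dpsi_part j a b x y = - sg (a \<and> b) (dpsi_part j b a y x)"
  unfolding dCE1_h_def
  by (subst br_skew, assumption, assumption)
    (cases a; cases b; cases j; simp add: psi_part.neg algebra_simps)

lemma super_alt_bilinear_dpsi: "super_alt_bilinear sL G sM dpsi"
  unfolding super_alt_bilinear_def
proof (intro conjI allI ballI)
  fix x y z c
  show "dpsi (x + y) z = dpsi x z + dpsi y z" "dpsi z (x + y) = dpsi z x + dpsi z y"
    by (simp_all add: dCE1_def gproj_add[OF graded_L] dpsi_part_add_left dpsi_part_add_right
        sum.distrib)
  show "dpsi (sL c x) y = sM c (dpsi x y)" "dpsi x (sL c y) = sM c (dpsi x y)"
    by (simp_all add: dCE1_def gproj_scale[OF graded_L] dpsi_part_scale_left dpsi_part_scale_right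
        M.scale_sum_right)
next
  fix a b x y
  assume x: "x \<in> G a" and y: "y \<in> G b"
  show "dpsi x y = - sg (a \<and> b) (dpsi y x)"
    unfolding dpsi_homogeneous[OF x y] dpsi_homogeneous[OF y x]
      dpsi_part_skew[OF x y, of False] dpsi_part_skew[OF x y, of True]
    by (simp add: sg_add)
qed

lemma ind1_scale:
  assumes "x \<in> G False"
  shows "ind1 p pp act psi (sL c x) = sM (c ^ p) (ind1 p pp act psi x)"
proof -
  have "c ^ (p - 1) * c = c ^ p" using p_gt_2 by (simp flip: power_Suc2)
  then show ?thesis
    unfolding ind1_def
    by (simp add: pp_scale[OF assms] psi.scale act_power_scale_left act_power.scale
        M.scale_right_diff_distrib mult.commute)
qed

lemma dpsi_alternating_sum:
  assumes xs_even: "\<And>i. xs i \<in> G False" and "n \<ge> 1"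
  shows "dpsi (lnb br xs (n - 1)) (xs (n + 1))
       + (\<Sum>k\<in>{1..n - 1}. sM ((-1) ^ k)
            (acts act xs (n + 1) k (dpsi (lnb br xs (n - 1 - k)) (xs (n + 1 - k)))))
     = psi (lnb br xs n) - lnb_transl xs (\<lambda>i. psi (xs i)) n"
  using \<open>n \<ge> 1\<close>
proof (induction n rule: dec_induct)
  case base
  show ?case using xs_even by (simp add: dpsi_even)
next
  case (step n)
  let ?T = "\<lambda>n k. sM ((-1) ^ k) (acts act xs (n + 1) k (dpsi (lnb br xs (n - 1 - k)) (xs (n + 1 - k))))"
  have "(\<Sum>k=1..Suc n - 1. ?T (Suc n) k) = (\<Sum>k=0..n-1. ?T (Suc n) (Suc k))"
    using step.hyps sum.shift_bounds_cl_Suc_ivl[where g = "?T (Suc n)" and m = 0 and n = "n - 1"] by simp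
  also have "\<dots> = (\<Sum>k=0..n-1. - act (xs (Suc (Suc n))) (?T n k))"
  proof (intro sum.cong refl)
    fix k assume "k \<in> {0..n-1}"
    then have "Suc n - 1 - Suc k = n - 1 - k" "Suc n + 1 - Suc k = n + 1 - k" "Suc n + 1 - 1 = n + 1"
      using step.hyps by auto
    then show "?T (Suc n) (Suc k) = - act (xs (Suc (Suc n))) (?T n k)"
      by (simp only: acts_Suc) (simp add: act_right.scale M.scale_minus_left)
  qed
  also have "\<dots> = - act (xs (Suc (Suc n))) (dpsi (lnb br xs (n - 1)) (xs (n + 1)) + (\<Sum>k=1..n-1. ?T n k))"
  proof -
    have "{0..n-1} = insert 0 {1..n-1}" by auto
    then show ?thesis by (simp add: act_right.sum act_right.add sum_negf)
  qed
  finally have sum_eq: "(\<Sum>k=1..Suc n - 1. ?T (Suc n) k) = act (xs (Suc (Suc n)))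
      (lnb_transl xs (\<lambda>i. psi (xs i)) n) - act (xs (Suc (Suc n))) (psi (lnb br xs n))"
    using step.IH by (simp add: act_right.diff)
  have dpsi_eq: "dpsi (lnb br xs (Suc n - 1)) (xs (Suc n + 1)) = psi (lnb br xs (Suc n))
      - act (lnb br xs n) (psi (xs (Suc (Suc n)))) + act (xs (Suc (Suc n))) (psi (lnb br xs n))"
    using lnb_mem_even[OF xs_even, where n = n] xs_even by (simp add: dpsi_even)
  have "d = P - a + c \<Longrightarrow> s = w - c \<Longrightarrow> d + s = P - (a - w)" for d s P a c w :: 'm
    by simp
  then show ?case unfolding lnb_transl.simps using dpsi_eq sum_eq by blast
qed

lemma dpsi_alternating_sum_pseq:
  assumes x: "x \<in> G False" and y: "y \<in> G False"
  shows "dpsi (lnb br (pseq x y S) (p - 2)) (pseq x y S p)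
       + (\<Sum>k\<in>{1..p - 2}. sM ((-1) ^ k) (acts act (pseq x y S) p k
            (dpsi (lnb br (pseq x y S) (p - k - 2)) (pseq x y S (p - k)))))
     = psi (lnb br (pseq x y S) (p - 1)) - lnb_transl (pseq x y S) (pseq (psi x) (psi y) S) (p - 1)"
proof -
  have "pseq x y S i \<in> G False" for i using x y by (simp add: pseq_def)
  moreover have "p - 1 - 1 = p - 2" "p - 1 + 1 = p" "p - 1 - 1 - k = p - k - 2" "p - 1 + 1 - k = p - k"
    for k using p_gt_2 by auto
  ultimately show ?thesis
    using dpsi_alternating_sum[of "pseq x y S" "p - 1"] p_gt_2 by (simp add: pseq_comp)
qed

lemma compatible_dpsi_ind1: "compatible p sL G br sM act dpsi (ind1 p pp act psi)"
  unfolding compatible_def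
proof (intro conjI allI ballI)
  fix c x
  assume "x \<in> G False"
  then show "ind1 p pp act psi (sL c x) = sM (c ^ p) (ind1 p pp act psi x)"
    by (rule ind1_scale)
next
  fix x y
  assume x: "x \<in> G False" and y: "y \<in> G False"
  define c where "c S = inverse (of_nat (card S + 1) :: 'k)" for S :: "nat set"
  define P where "P S = psi (lnb br (pseq x y S) (p - 1))" for S
  define V where "V S = lnb_transl (pseq x y S) (pseq (psi x) (psi y) S) (p - 1)" for S
  have ind1_add: "ind1 p pp act psi (x + y)
      = psi (pp x) + psi (pp y) + (\<Sum>S\<in>Pow {3..p}. sM (c S) (P S))
        - ((act x ^^ (p - 1)) (psi x) + (act y ^^ (p - 1)) (psi y) + (\<Sum>S\<in>Pow {3..p}. sM (c S) (V S)))"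
    unfolding ind1_def psi.add act_power_add_jacobson[OF x y] pp_add[OF x y]
    by (simp add: psi.add psi.sum psi.scale c_def P_def V_def)
  have telescope: "(\<Sum>S\<in>Pow {3..p}. sM (c S) (dpsi (lnb br (pseq x y S) (p - 2)) (pseq x y S p)))
        + (\<Sum>S\<in>Pow {3..p}. sM (c S) (\<Sum>k\<in>{1..p - 2}. sM ((-1) ^ k) (acts act (pseq x y S) p k
             (dpsi (lnb br (pseq x y S) (p - k - 2)) (pseq x y S (p - k))))))
      = (\<Sum>S\<in>Pow {3..p}. sM (c S) (P S)) - (\<Sum>S\<in>Pow {3..p}. sM (c S) (V S))"
    unfolding sum.distrib[symmetric] sum_subtractf[symmetric]
    by (intro sum.cong refl)
      (simp only: M.scale_right_distrib[symmetric] dpsi_alternating_sum_pseq[OF x y] P_def V_def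
        M.scale_right_diff_distrib)
  have regroup: "Px + Py + SP - (Ax + Ay + SV) = (Px - Ax) + (Py - Ay) + (SP - SV)"
    for Px Py SP Ax Ay SV :: 'm
    by (simp add: algebra_simps)
  have "ind1 p pp act psi (x + y) = ind1 p pp act psi x + ind1 p pp act psi y
      + ((\<Sum>S\<in>Pow {3..p}. sM (c S) (P S)) - (\<Sum>S\<in>Pow {3..p}. sM (c S) (V S)))"
    unfolding ind1_add regroup by (simp only: ind1_def)
  then show "ind1 p pp act psi (x + y) = ind1 p pp act psi x + ind1 p pp act psi y
      + (\<Sum>S\<in>Pow {3..p}. sM (inverse (of_nat (card S + 1)))
           (dpsi (lnb br (pseq x y S) (p - 2)) (pseq x y S p)))
      + (\<Sum>S\<in>Pow {3..p}. sM (inverse (of_nat (card S + 1)))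
           (\<Sum>k\<in>{1..p - 2}. sM ((-1) ^ k) (acts act (pseq x y S) p k
              (dpsi (lnb br (pseq x y S) (p - k - 2)) (pseq x y S (p - k))))))"
    using telescope unfolding c_def by (simp only: add.assoc)
qed

lemma cpart2_dpsi_br_right_power:
  assumes x: "x \<in> G a" and y: "y \<in> G False"
  shows "cpart2 G GM j dpsi (((\<lambda>w. br w y) ^^ k) x) y
       = psi_part j (((\<lambda>w. br w y) ^^ Suc k) x)
         - sg (a \<and> j) (act (((\<lambda>w. br w y) ^^ k) x) (psi_part j y))
         + act y (psi_part j (((\<lambda>w. br w y) ^^ k) x))"
  by (simp add: cpart2_dpsi[OF br_right_power_mem[OF x y] y] dCE1_h_def)

lemma alternating_sum_cpart2_dpsi:
  assumes x: "x \<in> G a" and y: "y \<in> G False"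
  shows "(\<Sum>i\<in>{..p - 1}. sM ((-1) ^ i)
            ((act y ^^ i) (cpart2 G GM j dpsi (((\<lambda>z. br z y) ^^ (p - 1 - i)) x) y)))
       = psi_part j (br x (pp y)) + act (pp y) (psi_part j x)
         - sg (a \<and> j) (act x ((act y ^^ (p - 1)) (psi_part j y)))"
proof -
  define z where "z k = ((\<lambda>w. br w y) ^^ k) x" for k
  define f where "f i = (act y ^^ i) (psi_part j (z (p - i)))" for i
  have "{..p - 1} = {..<p}" using p_gt_2 by auto
  have summand: "sM ((-1) ^ i) ((act y ^^ i) (cpart2 G GM j dpsi (z (p - 1 - i)) y))
      = sM ((-1) ^ i) (f i + f (Suc i))
        - sg (a \<and> j) (sM ((-1) ^ i) ((act y ^^ i) (act (z (p - 1 - i)) (psi_part j y))))"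
    if "i < p" for i
  proof -
    have "Suc (p - 1 - i) = p - i" "p - Suc i = p - 1 - i" using that by auto
    have cpart2_z: "cpart2 G GM j dpsi (z (p - 1 - i)) y
        = psi_part j (z (p - i)) - sg (a \<and> j) (act (z (p - 1 - i)) (psi_part j y))
          + act y (psi_part j (z (p - 1 - i)))"
      using cpart2_dpsi_br_right_power[OF x y, of j "p - 1 - i"] \<open>Suc (p - 1 - i) = p - i\<close>
      by (simp only: z_def)
    have f_Suc: "(act y ^^ i) (act y (psi_part j (z (p - 1 - i)))) = f (Suc i)"
      using \<open>p - Suc i = p - 1 - i\<close> by (simp add: f_def funpow_swap1)
    have f: "(act y ^^ i) (psi_part j (z (p - i))) = f i"
      by (simp add: f_def)
    show ?thesis
      unfolding cpart2_z act_power.add act_power.diff act_power_sg f f_Suc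
      by (simp add: M.scale_right_distrib M.scale_right_diff_distrib scale_sg algebra_simps)
  qed
  have "(\<Sum>i\<in>{..p - 1}. sM ((-1) ^ i)
            ((act y ^^ i) (cpart2 G GM j dpsi (((\<lambda>z. br z y) ^^ (p - 1 - i)) x) y)))
      = (\<Sum>i<p. sM ((-1) ^ i) (f i + f (Suc i)))
        - sg (a \<and> j) (\<Sum>i<p. sM ((-1) ^ i) ((act y ^^ i) (act (z (p - 1 - i)) (psi_part j y))))"
    unfolding \<open>{..p - 1} = {..<p}\<close> z_def[symmetric] sg_sum[symmetric] sum_subtractf[symmetric]
    by (rule sum.cong[OF refl summand]) simp
  moreover have "f 0 = psi_part j (br x (pp y))"
    using br_right_power_p[OF x y] by (simp add: f_def z_def)
  moreover have "f p = act (pp y) (psi_part j x)"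
    using act_pp[OF y] by (simp add: f_def z_def)
  moreover have "(\<Sum>i<p. sM ((-1) ^ i) (f i + f (Suc i))) = f 0 + f p"
    using odd_p by (simp add: alternating_sum_telescope M.scale_minus_left)
  moreover have "(\<Sum>i<p. sM ((-1) ^ i) ((act y ^^ i) (act (z (p - 1 - i)) (psi_part j y))))
      = act x ((act y ^^ (p - 1)) (psi_part j y))"
    unfolding z_def by (rule alternating_act_sum[OF x y])
  ultimately show ?thesis by simp
qed

lemma ind2_h_dpsi_ind1:
  assumes x: "x \<in> G a" and y: "y \<in> G False"
  shows "ind2_h p br pp sM act j a (cpart2 G GM j dpsi) (\<lambda>z. gproj GM j (ind1 p pp act psi z)) x y = 0"
proof -
  have "cpart2 G GM j dpsi x (pp y)
      = psi_part j (br x (pp y)) - sg (a \<and> j) (act x (psi_part j (pp y))) + act (pp y) (psi_part j x)"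
    by (simp add: cpart2_dpsi[OF x pp_mem[OF y]] dCE1_h_def)
  moreover have "gproj GM j (ind1 p pp act psi y) = psi_part j (pp y) - (act y ^^ (p - 1)) (psi_part j y)"
    by (simp add: ind1_def gproj_diff[OF graded_M] act_power_gproj[OF y]
        psi_part_homogeneous[OF pp_mem[OF y]] psi_part_homogeneous[OF y])
  ultimately show ?thesis
    unfolding ind2_h_def alternating_sum_cpart2_dpsi[OF x y]
    by (cases "a \<and> j") (auto simp: act_right.diff conj_commute)
qed

lemma ind2_dpsi_ind1: "y \<in> G False \<Longrightarrow> ind2 p G br pp sM GM act dpsi (ind1 p pp act psi) x y = 0"
  unfolding ind2_def by (intro sum.neutral ballI ind2_h_dpsi_ind1 gproj_mem[OF graded_L])

end

theorem mainTheorem2: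
  fixes p :: nat
    and sL :: "'k::field \<Rightarrow> 'l::ab_group_add \<Rightarrow> 'l" and G :: "bool \<Rightarrow> 'l set"
    and br :: "'l \<Rightarrow> 'l \<Rightarrow> 'l" and pp :: "'l \<Rightarrow> 'l"
    and sM :: "'k \<Rightarrow> 'm::ab_group_add \<Rightarrow> 'm" and GM :: "bool \<Rightarrow> 'm set"
    and act :: "'l \<Rightarrow> 'm \<Rightarrow> 'm" and psi :: "'l \<Rightarrow> 'm"
  assumes "CHAR('k) = p" and "prime p" and "p > 2"
    and "restricted_lie_superalgebra p sL G br pp"
    and "restricted_module p sL G br pp sM GM act"
    and "Vector_Spaces.linear sL sM psi"
  shows "C2star p sL G br sM act (dCE1 G br GM act psi) (ind1 p pp act psi)
       \<and> (\<forall>u v w. dCE2 G br GM act (dCE1 G br GM act psi) u v w = 0)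
       \<and> (\<forall>x. \<forall>y\<in>G False.
            ind2 p G br pp sM GM act (dCE1 G br GM act psi) (ind1 p pp act psi) x y = 0)"
proof -
  interpret restricted_1cochain p sL G br pp sM GM act psi
    by (intro restricted_1cochain.intro restricted_rep.intro restricted_1cochain_axioms.intro assms)
  show ?thesis
    unfolding C2star_def
    using super_alt_bilinear_dpsi compatible_dpsi_ind1 dCE2_dpsi ind2_dpsi_ind1 by blast
qed

end
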